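(* Let $\mathcal{H}=L^2(\mathcal{Z})$ and let $$X_i=\mu+\Delta_n\,g\!\left(\tfrac in\right)+\varepsilon_i,\qquad i=1,\ldots,n,$$ where $\mu,\Delta_n\in\mathcal{H}$. Assume that $g:[0,1]\to\mathbb{R}$ is non-constant, bounded, Riemann integrable and piecewise continuous, with $g(0)=0$; piecewise continuity means that $[0,1]$ can be partitioned into finitely many intervals of positive length on each of which $g$ is continuous. Assume the errors satisfy the following two conditions. (A1) $\{\varepsilon_i\}_{i\in\mathbb{Z}}$ is a centered, strictly stationary sequence of $\mathcal{H}$-valued random variables with $\mathsf{E}\|\varepsilon_1\|^k<\infty$ for some $k>2$. With $C_r=\mathsf{E}[\varepsilon_0\otimes\varepsilon_r]$ one has $\sum_{r}\|C_r\|<\infty$, and $C_\varepsilon=\sum_rC_r\neq0$. Write $C_\varepsilon=\sum_{p\ge1}\lambda_{p,\varepsilon}v_{p,\varepsilon}\otimes v_{p,\varepsilon}$ with non-increasing eigenvalues and orthonormal basis $\{v_{p,\varepsilon}\}$. Moreover $\sum_{p\ge1}\sum_{h\in\mathbb{Z}}|\mathsf{Cov}(\langle\varepsilon_0,v_{p,\varepsilon}\rangle,\langle\varepsilon_h,v_{p,\varepsilon}\rangle)|<\infty$. (A2) $\{n^{-1/2}\sum_{i=1}^{\lfloor tn\rfloor}\varepsilon_i\}_{t\in[0,1]}$ converges weakly in $D^{\mathcal{H}}[0,1]$ to an $\mathcal{H}$-valued Brownian motion with covariance operator $C_\varepsilon$. Let $\hat C_n$ be a random bounded self-adjoint positive semidefinite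 operator computed from $X_1,\ldots,X_n$, with largest eigenvalue $\hat\lambda_{1,n}$, and let $$T_{n,\mathrm{WF}}(\hat C_n)=\max_{1\le k<n}\Big\|(\hat C_n+\hat\lambda_{1,n}\mathrm{Id})^{-1/2}\frac{1}{\sqrt n}\sum_{i=1}^k(X_i-\bar X_n)\Big\|.$$ If $\|\hat C_n\|=o_P(n\|\Delta_n\|^2)$ and $\sqrt n\|\Delta_n\|\to\infty$, then $T_{n,\mathrm{WF}}(\hat C_n)\to\infty$ in probability as $n\to\infty$.
   Context: $\mathcal{H}=L^2(\mathcal{Z})$ is the real separable Hilbert space of square-integrable functions on a domain $\mathcal{Z}$ with a $\sigma$-finite measure $\nu$, with inner product $\langle f,g\rangle=\int fg\,d\nu$ and norm $\|\cdot\|$. The tensor product is $(v\otimes w)(h)=\langle v,h\rangle w$. $\|\cdot\|$ on operators is the operator norm. $\bar X_n=n^{-1}\sum_{i=1}^nX_i$. For a positive definite bounded self-adjoint operator $A$, $A^{-1/2}$ is its unique positive definite inverse square root. *)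

theory Defs
  imports "HOL-Probability.Probability"
begin

definition tensor :: "'h::real_inner \<Rightarrow> 'h \<Rightarrow> ('h \<Rightarrow>\<^sub>L 'h)" where
  "tensor v w = Blinfun (\<lambda>h. (v \<bullet> h) *\<^sub>R w)"

definition self_adjoint_op :: "('h::real_inner \<Rightarrow>\<^sub>L 'h) \<Rightarrow> bool" where
  "self_adjoint_op A \<longleftrightarrow> (\<forall>x y. blinfun_apply A x \<bullet> y = x \<bullet> blinfun_apply A y)"

definition psd_op :: "('h::real_inner \<Rightarrow>\<^sub>L 'h) \<Rightarrow> bool" where
  "psd_op A \<longleftrightarrow> self_adjoint_op A \<and> (\<forall>x. blinfun_apply A x \<bullet> x \<ge> 0)"

definition pd_op :: "('h::real_inner \<Rightarrow>\<^sub>L 'h) \<Rightarrow> bool" where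
  "pd_op A \<longleftrightarrow> self_adjoint_op A \<and> (\<forall>x. x \<noteq> 0 \<longrightarrow> blinfun_apply A x \<bullet> x > 0)"

definition is_eigenvalue :: "('h::real_inner \<Rightarrow>\<^sub>L 'h) \<Rightarrow> real \<Rightarrow> bool" where
  "is_eigenvalue A l \<longleftrightarrow> (\<exists>x. x \<noteq> 0 \<and> blinfun_apply A x = l *\<^sub>R x)"

definition is_largest_eigenvalue :: "('h::real_inner \<Rightarrow>\<^sub>L 'h) \<Rightarrow> real \<Rightarrow> bool" where
  "is_largest_eigenvalue A l \<longleftrightarrow> is_eigenvalue A l \<and> (\<forall>m. is_eigenvalue A m \<longrightarrow> m \<le> l)"

definition inv_sqrt_op :: "('h::real_inner \<Rightarrow>\<^sub>L 'h) \<Rightarrow> ('h \<Rightarrow>\<^sub>L 'h)" where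
  "inv_sqrt_op A = (THE B. pd_op B \<and> B o\<^sub>L B o\<^sub>L A = id_blinfun \<and> A o\<^sub>L B o\<^sub>L B = id_blinfun)"

definition T_WF :: "nat \<Rightarrow> (nat \<Rightarrow> 'h::real_inner) \<Rightarrow> ('h \<Rightarrow>\<^sub>L 'h) \<Rightarrow> real \<Rightarrow> real" where
  "T_WF n X A l =
     (let Xbar = (1 / real n) *\<^sub>R (\<Sum>i=1..n. X i)
      in Max ((\<lambda>k. norm (blinfun_apply (inv_sqrt_op (A + l *\<^sub>R id_blinfun))
                   ((1 / sqrt (real n)) *\<^sub>R (\<Sum>i=1..k. X i - Xbar)))) ` {1..<n}))"

definition outer_prob :: "'a measure \<Rightarrow> 'a set \<Rightarrow> real" where
  "outer_prob M A = Inf {measure M B | B. B \<in> sets M \<and> A \<subseteq> B}"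

definition strictly_stationary :: "'a measure \<Rightarrow> (int \<Rightarrow> 'a \<Rightarrow> 'h::topological_space) \<Rightarrow> bool" where
  "strictly_stationary M e \<longleftrightarrow>
     (\<forall>h::int. distr M (Pi\<^sub>M UNIV (\<lambda>_. borel)) (\<lambda>\<omega> t. e (t + h) \<omega>)
             = distr M (Pi\<^sub>M UNIV (\<lambda>_. borel)) (\<lambda>\<omega> t. e t \<omega>))"

definition cov :: "'a measure \<Rightarrow> ('a \<Rightarrow> real) \<Rightarrow> ('a \<Rightarrow> real) \<Rightarrow> real" where
  "cov M U V = (\<integral>\<omega>. U \<omega> * V \<omega> \<partial>M) - (\<integral>\<omega>. U \<omega> \<partial>M) * (\<integral>\<omega>. V \<omega> \<partial>M)"

text \<open>H-valued Brownian motion on [0,1] with covariance operator C: a centred Gaussian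
  process with continuous paths and covariance  E <W s,x><W t,y> = min s t <C x, y>,
  characterised through its finite-dimensional characteristic functionals.\<close>
definition brownian_motion :: "'w measure \<Rightarrow> (real \<Rightarrow> 'w \<Rightarrow> 'h::real_inner) \<Rightarrow> ('h \<Rightarrow>\<^sub>L 'h) \<Rightarrow> bool" where
  "brownian_motion N W C \<longleftrightarrow> prob_space N \<and>
     (\<forall>t. W t \<in> borel_measurable N) \<and>
     (\<forall>\<omega>\<in>space N. continuous_on {0..1} (\<lambda>t. W t \<omega>)) \<and>
     (\<forall>(ts::real list) (xs::'h list). length ts = length xs \<and> set ts \<subseteq> {0..1} \<longrightarrow>
        (\<integral>\<omega>. cis (\<Sum>j<length ts. W (ts ! j) \<omega> \<bullet> xs ! j) \<partial>N)
          = complex_of_real (exp (- (1/2) * (\<Sum>j<length ts. \<Sum>l<length ts.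
                min (ts ! j) (ts ! l) * (blinfun_apply C (xs ! j) \<bullet> xs ! l)))))"

definition cadlag :: "(real \<Rightarrow> 'h::metric_space) \<Rightarrow> bool" where
  "cadlag x \<longleftrightarrow> (\<forall>t\<in>{0..<1}. continuous (at_right t) x) \<and>
                 (\<forall>t\<in>{0<..1}. \<exists>l. (x \<longlongrightarrow> l) (at_left t))"

definition time_changes :: "(real \<Rightarrow> real) set" where
  "time_changes = {\<tau>. strict_mono_on {0..1} \<tau> \<and> continuous_on {0..1} \<tau> \<and> \<tau> 0 = 0 \<and> \<tau> 1 = 1}"

definition skorokhod_dist :: "(real \<Rightarrow> 'h::real_normed_vector) \<Rightarrow> (real \<Rightarrow> 'h) \<Rightarrow> real" where
  "skorokhod_dist x y = (INF \<tau>\<in>time_changes.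
      max (SUP t\<in>{0..1}. \<bar>\<tau> t - t\<bar>) (SUP t\<in>{0..1}. norm (x t - y (\<tau> t))))"

definition bounded_continuous_on_D :: "((real \<Rightarrow> 'h::real_normed_vector) \<Rightarrow> real) \<Rightarrow> bool" where
  "bounded_continuous_on_D f \<longleftrightarrow>
     (\<exists>B. \<forall>x. cadlag x \<longrightarrow> \<bar>f x\<bar> \<le> B) \<and>
     (\<forall>x. cadlag x \<longrightarrow> (\<forall>e>0. \<exists>d>0. \<forall>y. cadlag y \<longrightarrow> skorokhod_dist x y < d \<longrightarrow> \<bar>f x - f y\<bar> < e))"

definition weak_conv_D :: "'a measure \<Rightarrow> (nat \<Rightarrow> 'a \<Rightarrow> real \<Rightarrow> 'h::real_normed_vector)
                             \<Rightarrow> 'w measure \<Rightarrow> ('w \<Rightarrow> real \<Rightarrow> 'h) \<Rightarrow> bool" where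
  "weak_conv_D M S N W \<longleftrightarrow>
     (\<forall>f. bounded_continuous_on_D f \<longrightarrow>
        (\<lambda>n. \<integral>\<omega>. f (S n \<omega>) \<partial>M) \<longlonglongrightarrow> (\<integral>\<omega>. f (W \<omega>) \<partial>N))"

definition piecewise_continuous_01 :: "(real \<Rightarrow> real) \<Rightarrow> bool" where
  "piecewise_continuous_01 g \<longleftrightarrow>
     (\<exists>Is. finite Is \<and> disjoint Is \<and> \<Union>Is = {0..1} \<and>
        (\<forall>I\<in>Is. is_interval I \<and> interior I \<noteq> {} \<and> continuous_on I g))"

end

(*
  Pick continuity points a, b of g in (0,1) with g a ~= g b.  For large n there are windows
  (k, k + m] of length m of order n near a and near b on which the sums of g (i / n) differ by
  at least c n.  The difference of the increments of the centred partial sums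
  V k = (SUM i = 1..k. X i - bar X) over these two windows is that difference times Delta_n plus
  four partial sums of the errors, which are O_P(sqrt n) by the functional CLT (A2).  On the
  other hand lambda_1 <= norm Chat, so Chat + lambda_1 Id <= 2 norm Chat and
  norm (V k) <= sqrt n * sqrt (2 norm Chat) * T.  Hence
  c n norm Delta_n <= 4 sqrt n (sqrt (2 norm Chat) T + O_P(1)), and the rate conditions
  norm Chat = o_P(n norm Delta_n^2) and sqrt n norm Delta_n -> infinity force T -> infinity.

  For this, inv_sqrt_op must denote the intended operator: the inverse square root is built as
  the binomial series of (I - T) powr (-1/2) for A = c (I - T), and shown to be unique.
*)

theory Submission
  imports Defs "HOL-Computational_Algebra.Formal_Power_Series"
begin

section \<open>Bounded operators\<close>

text \<open>The library instance \<open>blinfun :: (real_normed_vector, banach) banach\<close> does not apply to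
  targets of sort \<open>{real_inner, complete_space}\<close>, so completeness is shown for those.\<close>

lemma blinfun_Cauchy_convergent:
  fixes X :: "nat \<Rightarrow> 'a::real_normed_vector \<Rightarrow>\<^sub>L 'b::{real_normed_vector, complete_space}"
  assumes X: "Cauchy X"
  shows "convergent X"
proof -
  have "convergent (\<lambda>n. X n x)" for x
    using bounded_linear.Cauchy[OF blinfun.bounded_linear_left X] by (simp add: Cauchy_convergent_iff)
  then obtain v where v: "\<And>x. (\<lambda>n. X n x) \<longlonglongrightarrow> v x"
    unfolding convergent_def by metis
  obtain K where K: "\<And>n. norm (X n) \<le> K"
    using Cauchy_Bseq[OF X] by (auto simp: Bseq_def)
  have "bounded_linear v"
  proof
    show "v (x + y) = v x + v y" for x y
      by (rule LIMSEQ_unique[OF v]) (simp add: blinfun.add_right tendsto_add v)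
    show "v (r *\<^sub>R x) = r *\<^sub>R v x" for r x
      by (rule LIMSEQ_unique[OF v]) (simp add: blinfun.scaleR_right tendsto_scaleR v)
    have "norm (v x) \<le> norm x * K" for x
    proof (rule LIMSEQ_le_const2[OF tendsto_norm[OF v]])
      have "norm (X n x) \<le> norm x * K" for n
        using order_trans[OF norm_blinfun mult_right_mono[OF K norm_ge_zero]] by (simp add: mult.commute)
      then show "\<exists>N. \<forall>n\<ge>N. norm (X n x) \<le> norm x * K" by blast
    qed
    then show "\<exists>K. \<forall>x. norm (v x) \<le> norm x * K" by blast
  qed
  then have v_apply: "blinfun_apply (Blinfun v) = v"
    by (rule bounded_linear_Blinfun_apply)
  have "X \<longlonglongrightarrow> Blinfun v"
  proof (rule LIMSEQ_I)
    fix e :: real assume "e > 0"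
    then obtain N where N: "\<And>m n. m \<ge> N \<Longrightarrow> n \<ge> N \<Longrightarrow> norm (X m - X n) < e / 2"
      using CauchyD[OF X, of "e / 2"] by auto
    have "norm (X n - Blinfun v) \<le> e / 2" if n: "n \<ge> N" for n
    proof (rule norm_blinfun_bound)
      fix x
      have "norm (X n x - v x) \<le> e / 2 * norm x"
      proof (rule LIMSEQ_le_const2[OF tendsto_norm[OF tendsto_diff[OF tendsto_const v]]])
        have "norm (X n x - X m x) \<le> e / 2 * norm x" if "m \<ge> N" for m
          using order_trans[OF norm_blinfun mult_right_mono[OF less_imp_le[OF N[OF n that]] norm_ge_zero]]
          by (simp add: blinfun.diff_left)
        then show "\<exists>N. \<forall>m\<ge>N. norm (X n x - X m x) \<le> e / 2 * norm x" by blast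
      qed
      then show "norm ((X n - Blinfun v) x) \<le> e / 2 * norm x"
        by (simp add: blinfun.diff_left v_apply)
    qed (use \<open>e > 0\<close> in simp)
    moreover have "e / 2 < e" using \<open>e > 0\<close> by simp
    ultimately show "\<exists>N. \<forall>n\<ge>N. norm (X n - Blinfun v) < e"
      by (meson le_less_trans)
  qed
  then show ?thesis by (rule convergentI)
qed

lemma summable_norm_cancel_blinfun:
  fixes f :: "nat \<Rightarrow> 'a::real_normed_vector \<Rightarrow>\<^sub>L 'b::{real_normed_vector, complete_space}"
  assumes "summable (\<lambda>n. norm (f n))"
  shows "summable f"
proof -
  let ?S = "\<lambda>n. \<Sum>k<n. f k" and ?N = "\<lambda>n. \<Sum>k<n. norm (f k)"
  have le: "dist (?S m) (?S n) \<le> dist (?N m) (?N n)" if "m \<le> n" for m n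
  proof -
    have "?S n = ?S m + (\<Sum>k=m..<n. f k)"
      using sum.atLeastLessThan_concat[OF _ that, of 0 f] by (simp add: lessThan_atLeast0)
    then have "dist (?S m) (?S n) = norm (\<Sum>k=m..<n. f k)"
      by (simp add: dist_norm)
    also have "\<dots> \<le> (\<Sum>k=m..<n. norm (f k))" by (rule norm_sum)
    also have "\<dots> = dist (?N m) (?N n)"
    proof -
      have "?N n = ?N m + (\<Sum>k=m..<n. norm (f k))"
        using sum.atLeastLessThan_concat[OF _ that, of 0 "\<lambda>k. norm (f k)"]
        by (simp add: lessThan_atLeast0)
      then show ?thesis by (simp add: dist_real_def sum_nonneg)
    qed
    finally show ?thesis .
  qed
  have "dist (?S m) (?S n) \<le> dist (?N m) (?N n)" for m n
    using le[of m n] le[of n m] by (metis dist_commute nat_le_linear)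
  moreover have "Cauchy ?N"
    using assms by (simp add: summable_iff_convergent convergent_Cauchy)
  ultimately have "Cauchy ?S"
    unfolding Cauchy_def by (meson le_less_trans)
  then show ?thesis
    by (simp add: summable_iff_convergent blinfun_Cauchy_convergent)
qed

lemma (in bounded_bilinear) Cauchy_product_sums:
  assumes a: "summable (\<lambda>k. norm (a k))" "summable a"
    and b: "summable (\<lambda>k. norm (b k))" "summable b"
  shows "(\<lambda>k. \<Sum>i\<le>k. prod (a i) (b (k - i))) sums prod (suminf a) (suminf b)"
proof -
  obtain K where K: "\<And>x y. norm (prod x y) \<le> norm x * norm y * K"
    using bounded by blast
  let ?g = "\<lambda>(i, j). prod (a i) (b j)" and ?f = "\<lambda>(i, j). norm (a i) * norm (b j)"
  let ?Sq = "\<lambda>n::nat. {..<n} \<times> {..<n}" and ?Tr = "\<lambda>n::nat. {(i, j). i + j < n}"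
  have Tr_Sq: "?Tr n \<subseteq> ?Sq n" for n by auto
  have "(\<lambda>n. prod (\<Sum>k<n. a k) (\<Sum>k<n. b k)) \<longlonglongrightarrow> prod (suminf a) (suminf b)"
    by (intro tendsto summable_LIMSEQ a b)
  moreover have "prod (\<Sum>k<n. a k) (\<Sum>k<n. b k) = sum ?g (?Sq n)" for n
    by (subst sum_left) (simp add: sum_right sum.cartesian_product)
  ultimately have Sq: "(\<lambda>n. sum ?g (?Sq n)) \<longlonglongrightarrow> prod (suminf a) (suminf b)"
    by simp
  \<comment> \<open>the terms outside the triangle are controlled by the real Cauchy product of the norms\<close>
  have "(\<lambda>n. (\<Sum>k<n. norm (a k)) * (\<Sum>k<n. norm (b k))) \<longlonglongrightarrow> (\<Sum>k. norm (a k)) * (\<Sum>k. norm (b k))"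
    by (intro tendsto_mult summable_LIMSEQ a b)
  then have f_Sq: "(\<lambda>n. sum ?f (?Sq n)) \<longlonglongrightarrow> (\<Sum>k. norm (a k)) * (\<Sum>k. norm (b k))"
    by (simp add: sum_product sum.cartesian_product)
  have "(\<lambda>k. \<Sum>i\<le>k. norm (a i) * norm (b (k - i))) sums ((\<Sum>k. norm (a k)) * (\<Sum>k. norm (b k)))"
    using Series.Cauchy_product_sums[of "\<lambda>k. norm (a k)" "\<lambda>k. norm (b k)"] a b by simp
  then have f_Tr: "(\<lambda>n. sum ?f (?Tr n)) \<longlonglongrightarrow> (\<Sum>k. norm (a k)) * (\<Sum>k. norm (b k))"
    by (simp only: sums_def sum.triangle_reindex)
  have diff: "sum h (?Sq n - ?Tr n) = sum h (?Sq n) - sum h (?Tr n)" for h :: "nat \<times> nat \<Rightarrow> 'z::ab_group_add" and n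
    by (rule sum_diff[OF _ Tr_Sq]) simp
  have "(\<lambda>n. sum ?f (?Sq n) - sum ?f (?Tr n)) \<longlonglongrightarrow> 0"
    using tendsto_diff[OF f_Sq f_Tr] by (simp only: diff_self)
  then have lim: "(\<lambda>n. K * sum ?f (?Sq n - ?Tr n)) \<longlonglongrightarrow> 0"
    unfolding diff by (rule tendsto_mult_right_zero)
  have bound: "norm (sum ?g (?Sq n - ?Tr n)) \<le> K * sum ?f (?Sq n - ?Tr n)" for n
  proof (rule order_trans[OF norm_sum])
    have "norm (?g p) \<le> K * ?f p" for p
      using K[of "a (fst p)" "b (snd p)"] by (simp add: case_prod_beta mult_ac)
    then show "(\<Sum>p\<in>?Sq n - ?Tr n. norm (?g p)) \<le> K * sum ?f (?Sq n - ?Tr n)"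
      by (simp only: sum_distrib_left sum_mono)
  qed
  have "(\<lambda>n. sum ?g (?Sq n - ?Tr n)) \<longlonglongrightarrow> 0"
    by (rule Lim_null_comparison[OF always_eventually[OF allI[OF bound]] lim])
  then have "(\<lambda>n. sum ?g (?Sq n) - sum ?g (?Tr n)) \<longlonglongrightarrow> 0"
    by (simp only: diff)
  from Lim_transform2[OF Sq this] show ?thesis
    by (simp only: sums_def sum.triangle_reindex)
qed

interpretation blinfun_compose: bounded_bilinear blinfun_compose
  by (rule bounded_bilinear_blinfun_compose)

lemma blinfun_compose_id [simp]: "X o\<^sub>L id_blinfun = X" "id_blinfun o\<^sub>L X = X"
  by (rule blinfun_eqI, simp)+

lemma blinfun_compose_assoc: "(X o\<^sub>L Y) o\<^sub>L Z = X o\<^sub>L (Y o\<^sub>L Z)"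
  by (rule blinfun_eqI) simp

fun blinfun_pow :: "('a::real_normed_vector \<Rightarrow>\<^sub>L 'a) \<Rightarrow> nat \<Rightarrow> ('a \<Rightarrow>\<^sub>L 'a)" where
  "blinfun_pow T 0 = id_blinfun"
| "blinfun_pow T (Suc k) = T o\<^sub>L blinfun_pow T k"

lemma blinfun_pow_add_apply: "blinfun_pow T (i + j) x = blinfun_pow T i (blinfun_pow T j x)"
  by (induction i) simp_all

lemma blinfun_pow_add: "blinfun_pow T (i + j) = blinfun_pow T i o\<^sub>L blinfun_pow T j"
  by (rule blinfun_eqI) (simp add: blinfun_pow_add_apply)

lemma blinfun_pow_apply_commute: "blinfun_pow T k (T x) = T (blinfun_pow T k x)"
  using blinfun_pow_add_apply[of T k 1 x] by simp

lemma norm_blinfun_pow_le: "norm (blinfun_pow T k) \<le> norm T ^ k"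
proof (induction k)
  case 0
  then show ?case by (simp add: norm_blinfun_id_le)
next
  case (Suc k)
  have "norm (blinfun_pow T (Suc k)) \<le> norm T * norm (blinfun_pow T k)"
    by (simp add: norm_blinfun_compose)
  also have "\<dots> \<le> norm T ^ Suc k"
    using Suc.IH by (simp add: mult_left_mono)
  finally show ?case .
qed

lemma blinfun_pow_commute:
  assumes "X o\<^sub>L T = T o\<^sub>L X"
  shows "X o\<^sub>L blinfun_pow T k = blinfun_pow T k o\<^sub>L X"
proof -
  have XT: "X (T y) = T (X y)" for y
    using arg_cong[OF assms, of "\<lambda>F. F y"] by simp
  show ?thesis
    by (rule blinfun_eqI, induction k) (simp_all add: XT)
qed

lemma self_adjoint_blinfun_pow:
  assumes T: "self_adjoint_op T"
  shows "self_adjoint_op (blinfun_pow T k)"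
proof (induction k)
  case 0
  then show ?case by (simp add: self_adjoint_op_def)
next
  case (Suc k)
  have "blinfun_pow T (Suc k) x \<bullet> y = x \<bullet> blinfun_pow T (Suc k) y" for x y
    using T Suc.IH by (simp add: self_adjoint_op_def blinfun_pow_apply_commute)
  then show ?case by (simp add: self_adjoint_op_def)
qed

lemma inner_blinfun_pow_nonneg:
  assumes T: "psd_op T"
  shows "0 \<le> blinfun_pow T k x \<bullet> x"
proof -
  have sa: "self_adjoint_op (blinfun_pow T j)" for j
    using T by (simp add: psd_op_def self_adjoint_blinfun_pow)
  have "k = k div 2 + k div 2 \<or> k = k div 2 + Suc (k div 2)" by presburger
  then obtain j where "k = j + j \<or> k = j + Suc j" by blast
  then show ?thesis
  proof
    assume "k = j + j"
    then have "blinfun_pow T k x \<bullet> x = blinfun_pow T j x \<bullet> blinfun_pow T j x"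
      using sa[of j] by (simp add: blinfun_pow_add_apply self_adjoint_op_def)
    then show ?thesis by simp
  next
    assume "k = j + Suc j"
    then have "blinfun_pow T k x = blinfun_pow T j (T (blinfun_pow T j x))"
      using blinfun_pow_add_apply[of T j "Suc j" x] by simp
    then have "blinfun_pow T k x \<bullet> x = T (blinfun_pow T j x) \<bullet> blinfun_pow T j x"
      using sa[of j] by (simp add: self_adjoint_op_def)
    then show ?thesis using T by (simp add: psd_op_def)
  qed
qed

lemma inner_apply_le_norm:
  fixes A :: "'a::real_inner \<Rightarrow>\<^sub>L 'a"
  shows "A x \<bullet> x \<le> norm A * (norm x)\<^sup>2"
proof -
  have "A x \<bullet> x \<le> norm (A x) * norm x" by (rule norm_cauchy_schwarz)
  also have "\<dots> \<le> norm A * norm x * norm x" by (intro mult_right_mono norm_blinfun) simp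
  finally show ?thesis by (simp add: power2_eq_square mult.assoc)
qed

lemma psd_norm_apply_sq_le:
  fixes A :: "'a::real_inner \<Rightarrow>\<^sub>L 'a"
  assumes A: "psd_op A" and q: "q > 0" and le: "\<And>x. A x \<bullet> x \<le> q * (norm x)\<^sup>2"
  shows "(norm (A w))\<^sup>2 \<le> q * (A w \<bullet> w)"
proof -
  define u where "u = A w"
  define s where "s = 1 / q"
  have s: "s > 0" "q * s = 1"
    using q by (auto simp: s_def)
  \<comment> \<open>positivity of \<open>A\<close> at \<open>w - u / q\<close>\<close>
  have "0 \<le> A (w - s *\<^sub>R u) \<bullet> (w - s *\<^sub>R u)"
    using A by (simp add: psd_op_def)
  also have "\<dots> = u \<bullet> w - s * (u \<bullet> u) - s * (A u \<bullet> w) + s * s * (A u \<bullet> u)"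
    by (simp add: u_def blinfun.diff_right blinfun.scaleR_right inner_diff_left inner_diff_right
        algebra_simps)
  also have "A u \<bullet> w = u \<bullet> u"
    using A by (simp add: psd_op_def self_adjoint_op_def u_def)
  also have "s * s * (A u \<bullet> u) \<le> s * s * (q * (u \<bullet> u))"
    using le[of u] by (intro mult_left_mono) (simp_all add: power2_norm_eq_inner)
  also have "\<dots> = s * (q * s) * (u \<bullet> u)"
    by (simp add: mult_ac)
  finally have "s * (u \<bullet> u) \<le> u \<bullet> w"
    using s(2) by simp
  then have "u \<bullet> u \<le> q * (u \<bullet> w)"
    using mult_left_mono[of "s * (u \<bullet> u)" "u \<bullet> w" q] q s by (simp add: mult.assoc[symmetric])
  then show ?thesis
    by (simp add: u_def power2_norm_eq_inner)
qed

lemma summable_scaled_blinfun_pow: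
  fixes T :: "'a::{real_normed_vector, complete_space} \<Rightarrow>\<^sub>L 'a"
  assumes T: "norm T < 1" and c: "\<And>k. \<bar>c k\<bar> \<le> 1"
  shows "summable (\<lambda>k. norm (c k *\<^sub>R blinfun_pow T k))" "summable (\<lambda>k. c k *\<^sub>R blinfun_pow T k)"
proof -
  have "norm (c k *\<^sub>R blinfun_pow T k) \<le> norm T ^ k" for k
    using mult_mono[OF c[of k] norm_blinfun_pow_le[of T k]] by simp
  then show "summable (\<lambda>k. norm (c k *\<^sub>R blinfun_pow T k))"
    using T by (intro summable_comparison_test'[OF summable_geometric]) auto
  then show "summable (\<lambda>k. c k *\<^sub>R blinfun_pow T k)"
    by (rule summable_norm_cancel_blinfun)
qed

lemma summable_blinfun_pow:
  fixes T :: "'a::{real_normed_vector, complete_space} \<Rightarrow>\<^sub>L 'a"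
  assumes "norm T < 1"
  shows "summable (\<lambda>k. norm (blinfun_pow T k))" "summable (blinfun_pow T)"
  using summable_scaled_blinfun_pow[OF assms, of "\<lambda>_. 1"] by simp_all

lemma neumann_series:
  fixes T :: "'a::{real_normed_vector, complete_space} \<Rightarrow>\<^sub>L 'a"
  assumes T: "norm T < 1"
  shows "(\<Sum>k. blinfun_pow T k) o\<^sub>L (id_blinfun - T) = id_blinfun"
    and "(id_blinfun - T) o\<^sub>L (\<Sum>k. blinfun_pow T k) = id_blinfun"
proof -
  have "blinfun_pow T \<longlonglongrightarrow> 0"
    using summable_LIMSEQ_zero[OF summable_blinfun_pow(2)[OF T]] .
  from telescope_sums'[OF this]
  have telescope: "(\<lambda>k. blinfun_pow T k - blinfun_pow T (Suc k)) sums id_blinfun"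
    by simp
  have "(\<lambda>k. blinfun_pow T k o\<^sub>L (id_blinfun - T)) sums ((\<Sum>k. blinfun_pow T k) o\<^sub>L (id_blinfun - T))"
    by (intro bounded_linear.sums[OF blinfun_compose.bounded_linear_left] summable_sums summable_blinfun_pow T)
  moreover have "blinfun_pow T k o\<^sub>L (id_blinfun - T) = blinfun_pow T k - blinfun_pow T (Suc k)" for k
    by (rule blinfun_eqI) (simp add: blinfun.diff_left blinfun.diff_right blinfun_pow_apply_commute)
  ultimately have "(\<lambda>k. blinfun_pow T k - blinfun_pow T (Suc k)) sums ((\<Sum>k. blinfun_pow T k) o\<^sub>L (id_blinfun - T))"
    by simp
  then show "(\<Sum>k. blinfun_pow T k) o\<^sub>L (id_blinfun - T) = id_blinfun"
    using telescope by (rule sums_unique2)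
  have "(\<lambda>k. (id_blinfun - T) o\<^sub>L blinfun_pow T k) sums ((id_blinfun - T) o\<^sub>L (\<Sum>k. blinfun_pow T k))"
    by (intro bounded_linear.sums[OF blinfun_compose.bounded_linear_right] summable_sums summable_blinfun_pow T)
  moreover have "(id_blinfun - T) o\<^sub>L blinfun_pow T k = blinfun_pow T k - blinfun_pow T (Suc k)" for k
    by (rule blinfun_eqI) (simp add: blinfun.diff_left blinfun.diff_right)
  ultimately have "(\<lambda>k. blinfun_pow T k - blinfun_pow T (Suc k)) sums ((id_blinfun - T) o\<^sub>L (\<Sum>k. blinfun_pow T k))"
    by simp
  then show "(id_blinfun - T) o\<^sub>L (\<Sum>k. blinfun_pow T k) = id_blinfun"
    using telescope by (rule sums_unique2)
qed

section \<open>The inverse square root\<close>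

text \<open>Taylor coefficients of \<open>(1 - t) powr (-1/2)\<close>.\<close>
definition inv_sqrt_coeff :: "nat \<Rightarrow> real" where
  "inv_sqrt_coeff k = (-1) ^ k * ((-1/2) gchoose k)"

lemma inv_sqrt_coeff_altdef: "inv_sqrt_coeff k = (\<Prod>i<k. (real (k - i) - 1/2) / real (k - i))"
proof -
  have "((-1/2::real) gchoose k) = (-1) ^ k * ((real k - 1/2) gchoose k)"
    using gbinomial_minus[of "1/2::real" k] by simp
  then have "inv_sqrt_coeff k = ((real k - 1/2) gchoose k)"
    by (simp add: inv_sqrt_coeff_def flip: power_add mult.assoc)
  also have "\<dots> = (\<Prod>i<k. (real (k - i) - 1/2) / real (k - i))"
    unfolding gbinomial_altdef_of_nat atLeast0LessThan
    by (intro prod.cong) (auto simp: of_nat_diff)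
  finally show ?thesis .
qed

lemma inv_sqrt_coeff_bounds: "0 \<le> inv_sqrt_coeff k" "inv_sqrt_coeff k \<le> 1"
  unfolding inv_sqrt_coeff_altdef
  by (auto intro!: prod_nonneg prod_le_1 simp: field_simps)

lemma inv_sqrt_coeff_convolution: "(\<Sum>i\<le>k. inv_sqrt_coeff i * inv_sqrt_coeff (k - i)) = 1"
proof -
  have "((-1::real) gchoose k) = (-1) ^ k"
    using gbinomial_minus[of "1::real" k] by (simp add: gbinomial_binomial flip: binomial_gbinomial)
  then have Vandermonde: "(\<Sum>i\<le>k. ((-1/2::real) gchoose i) * ((-1/2) gchoose (k - i))) = (-1) ^ k"
    using gbinomial_Vandermonde[of "-1/2::real" "-1/2" k] by (simp add: atLeast0AtMost)
  have "(\<Sum>i\<le>k. inv_sqrt_coeff i * inv_sqrt_coeff (k - i))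
      = (\<Sum>i\<le>k. (-1) ^ k * (((-1/2) gchoose i) * ((-1/2) gchoose (k - i))))"
    by (rule sum.cong) (auto simp: inv_sqrt_coeff_def mult_ac simp flip: power_add)
  also have "\<dots> = 1"
    unfolding sum_distrib_left[symmetric] Vandermonde by (simp flip: power_mult_distrib)
  finally show ?thesis .
qed

definition inv_sqrt_id_minus :: "('a::real_normed_vector \<Rightarrow>\<^sub>L 'a) \<Rightarrow> ('a \<Rightarrow>\<^sub>L 'a)" where
  "inv_sqrt_id_minus T = (\<Sum>k. inv_sqrt_coeff k *\<^sub>R blinfun_pow T k)"

context
  fixes T :: "'a::{real_inner, complete_space} \<Rightarrow>\<^sub>L 'a"
  assumes T: "norm T < 1"
begin

private lemma summable_inv_sqrt_terms:
  "summable (\<lambda>k. norm (inv_sqrt_coeff k *\<^sub>R blinfun_pow T k))"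
  "summable (\<lambda>k. inv_sqrt_coeff k *\<^sub>R blinfun_pow T k)"
  using summable_scaled_blinfun_pow[OF T, of inv_sqrt_coeff] inv_sqrt_coeff_bounds by simp_all

lemma inv_sqrt_id_minus_square:
  "inv_sqrt_id_minus T o\<^sub>L inv_sqrt_id_minus T = (\<Sum>k. blinfun_pow T k)"
proof -
  let ?a = "\<lambda>k. inv_sqrt_coeff k *\<^sub>R blinfun_pow T k"
  have "(\<Sum>i\<le>k. ?a i o\<^sub>L ?a (k - i)) = blinfun_pow T k" for k
  proof -
    have "?a i o\<^sub>L ?a (k - i) = (inv_sqrt_coeff i * inv_sqrt_coeff (k - i)) *\<^sub>R blinfun_pow T k"
      if "i \<le> k" for i
      using that blinfun_pow_add[of T i "k - i"]
      by (simp add: blinfun_compose.scaleR_left blinfun_compose.scaleR_right)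
    then show ?thesis
      by (simp add: inv_sqrt_coeff_convolution flip: scaleR_sum_left)
  qed
  then have "blinfun_pow T sums (inv_sqrt_id_minus T o\<^sub>L inv_sqrt_id_minus T)"
    using blinfun_compose.Cauchy_product_sums[OF summable_inv_sqrt_terms summable_inv_sqrt_terms]
    by (simp add: inv_sqrt_id_minus_def)
  then show ?thesis
    by (simp add: sums_iff)
qed

lemma inner_inv_sqrt_id_minus_sums:
  "(\<lambda>k. inv_sqrt_coeff k * (blinfun_pow T k x \<bullet> y)) sums (inv_sqrt_id_minus T x \<bullet> y)"
proof -
  have "bounded_linear (\<lambda>B. blinfun_apply B x \<bullet> y)"
    by (intro bounded_linear_compose[OF bounded_linear_inner_left] blinfun.bounded_linear_left)
  from bounded_linear.sums[OF this summable_sums[OF summable_inv_sqrt_terms(2)]] show ?thesis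
    by (simp add: inv_sqrt_id_minus_def blinfun.scaleR_left)
qed

lemma self_adjoint_inv_sqrt_id_minus:
  assumes "self_adjoint_op T"
  shows "self_adjoint_op (inv_sqrt_id_minus T)"
proof -
  have "blinfun_pow T k x \<bullet> y = blinfun_pow T k y \<bullet> x" for k x y
    using self_adjoint_blinfun_pow[OF assms, of k] by (simp add: self_adjoint_op_def inner_commute)
  then have "inv_sqrt_id_minus T x \<bullet> y = inv_sqrt_id_minus T y \<bullet> x" for x y
    using inner_inv_sqrt_id_minus_sums[of x y] inner_inv_sqrt_id_minus_sums[of y x]
    by (simp add: sums_unique2)
  then show ?thesis
    by (simp add: self_adjoint_op_def inner_commute)
qed

lemma inner_inv_sqrt_id_minus_ge:
  assumes "psd_op T"
  shows "(norm x)\<^sup>2 \<le> inv_sqrt_id_minus T x \<bullet> x"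
proof -
  let ?f = "\<lambda>k. inv_sqrt_coeff k * (blinfun_pow T k x \<bullet> x)"
  have "(\<Sum>k<1. ?f k) \<le> suminf ?f"
    using inner_inv_sqrt_id_minus_sums[of x x] inv_sqrt_coeff_bounds(1) inner_blinfun_pow_nonneg[OF assms]
    by (intro sum_le_suminf) (auto simp: sums_iff)
  then show ?thesis
    using sums_unique[OF inner_inv_sqrt_id_minus_sums[of x x]]
    by (simp add: inv_sqrt_coeff_def power2_norm_eq_inner)
qed

lemma inv_sqrt_id_minus_commute:
  assumes "X o\<^sub>L T = T o\<^sub>L X"
  shows "X o\<^sub>L inv_sqrt_id_minus T = inv_sqrt_id_minus T o\<^sub>L X"
proof -
  have "(\<lambda>k. X o\<^sub>L (inv_sqrt_coeff k *\<^sub>R blinfun_pow T k)) sums (X o\<^sub>L inv_sqrt_id_minus T)"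
    "(\<lambda>k. (inv_sqrt_coeff k *\<^sub>R blinfun_pow T k) o\<^sub>L X) sums (inv_sqrt_id_minus T o\<^sub>L X)"
    unfolding inv_sqrt_id_minus_def
    by (intro bounded_linear.sums[OF blinfun_compose.bounded_linear_left]
        bounded_linear.sums[OF blinfun_compose.bounded_linear_right] summable_sums
        summable_inv_sqrt_terms)+
  then show ?thesis
    using blinfun_pow_commute[OF assms]
    by (simp add: blinfun_compose.scaleR_left blinfun_compose.scaleR_right sums_unique2)
qed

end

lemma psd_id_minus_scaled:
  fixes A :: "'a::real_inner \<Rightarrow>\<^sub>L 'a"
  assumes sa: "self_adjoint_op A" and lb: "\<And>x. l * (norm x)\<^sup>2 \<le> A x \<bullet> x"
    and l: "0 < l" "l < c" and c: "norm A \<le> c"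
  shows "psd_op (id_blinfun - (1 / c) *\<^sub>R A)" "norm (id_blinfun - (1 / c) *\<^sub>R A) < 1"
proof -
  define T where "T = id_blinfun - (1 / c) *\<^sub>R A"
  define q where "q = 1 - l / c"
  have q: "0 < q" "q < 1"
    using l by (simp_all add: q_def)
  have T_apply: "T x = x - (1 / c) *\<^sub>R A x" for x
    by (simp add: T_def blinfun.diff_left blinfun.scaleR_left)
  have T_inner: "T x \<bullet> x = (norm x)\<^sup>2 - (A x \<bullet> x) / c" for x
    by (simp add: T_apply inner_diff_left power2_norm_eq_inner)
  have "A x \<bullet> x \<le> c * (norm x)\<^sup>2" for x
    using order_trans[OF inner_apply_le_norm mult_right_mono[OF c]] by simp
  then have "0 \<le> T x \<bullet> x" for x
    using l by (simp add: T_inner pos_divide_le_eq mult.commute)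
  moreover have "self_adjoint_op T"
    using sa by (simp add: self_adjoint_op_def T_apply inner_diff_left inner_diff_right)
  ultimately have psd_T: "psd_op T"
    by (simp add: psd_op_def)
  then show "psd_op (id_blinfun - (1 / c) *\<^sub>R A)"
    by (simp add: T_def)
  have T_le: "T x \<bullet> x \<le> q * (norm x)\<^sup>2" for x
  proof -
    have "l * (norm x)\<^sup>2 / c \<le> (A x \<bullet> x) / c"
      using lb[of x] l by (simp add: divide_right_mono)
    then show ?thesis
      by (simp add: T_inner q_def left_diff_distrib)
  qed
  have "norm (T x) \<le> q * norm x" for x
  proof -
    have "(norm (T x))\<^sup>2 \<le> q * (T x \<bullet> x)"
      by (rule psd_norm_apply_sq_le[OF psd_T q(1) T_le])
    also have "\<dots> \<le> q * (q * (norm x)\<^sup>2)"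
      using q T_le[of x] by (intro mult_left_mono) auto
    also have "\<dots> = (q * norm x)\<^sup>2"
      by (simp add: power2_eq_square)
    finally have "(norm (T x))\<^sup>2 \<le> (q * norm x)\<^sup>2" .
    then show ?thesis
      by (rule power2_le_imp_le) (use q in simp)
  qed
  then have "norm T \<le> q"
    using q by (intro norm_blinfun_bound) simp_all
  then show "norm (id_blinfun - (1 / c) *\<^sub>R A) < 1"
    using q by (simp add: T_def)
qed

lemma inv_sqrt_exists:
  fixes A :: "'a::{real_inner, complete_space} \<Rightarrow>\<^sub>L 'a"
  assumes sa: "self_adjoint_op A" and lb: "\<And>x. l * (norm x)\<^sup>2 \<le> A x \<bullet> x" and l: "l > 0"
  obtains B where "pd_op B" "B o\<^sub>L B o\<^sub>L A = id_blinfun" "A o\<^sub>L B o\<^sub>L B = id_blinfun"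
    "\<And>X. X o\<^sub>L A = A o\<^sub>L X \<Longrightarrow> X o\<^sub>L B = B o\<^sub>L X"
proof -
  \<comment> \<open>\<open>A = c (I - T)\<close>, so \<open>B = (I - T) powr (-1/2) / sqrt c\<close>\<close>
  define c where "c = norm A + 2 * l"
  define T where "T = id_blinfun - (1 / c) *\<^sub>R A"
  have c: "c > 0" "l < c" "norm A \<le> c"
    using l norm_ge_zero[of A] unfolding c_def by linarith+
  have psd_T: "psd_op T" and T_norm: "norm T < 1"
    unfolding T_def using psd_id_minus_scaled[OF sa lb l c(2,3)] by simp_all
  define S where "S = inv_sqrt_id_minus T"
  define B where "B = (1 / sqrt c) *\<^sub>R S"
  have A_eq: "A = c *\<^sub>R (id_blinfun - T)"
    using c by (simp add: T_def algebra_simps)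
  have BB: "B o\<^sub>L B = (1 / c) *\<^sub>R (\<Sum>k. blinfun_pow T k)"
    using c by (simp add: B_def blinfun_compose.scaleR_left blinfun_compose.scaleR_right
        inv_sqrt_id_minus_square[OF T_norm] S_def flip: real_sqrt_mult)
  show ?thesis
  proof
    have "B x \<bullet> y = x \<bullet> B y" for x y
      using self_adjoint_inv_sqrt_id_minus[OF T_norm] psd_T
      by (simp add: B_def S_def blinfun.scaleR_left psd_op_def self_adjoint_op_def)
    moreover have "0 < B x \<bullet> x" if "x \<noteq> 0" for x
    proof -
      have "0 < (norm x)\<^sup>2"
        using that by simp
      also have "\<dots> \<le> S x \<bullet> x"
        unfolding S_def by (rule inner_inv_sqrt_id_minus_ge[OF T_norm psd_T])
      finally show ?thesis
        using c by (simp add: B_def blinfun.scaleR_left)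
    qed
    ultimately show "pd_op B"
      by (simp add: pd_op_def self_adjoint_op_def)
    show "B o\<^sub>L B o\<^sub>L A = id_blinfun"
      using c by (simp add: BB A_eq blinfun_compose.scaleR_left blinfun_compose.scaleR_right
          neumann_series[OF T_norm])
    show "A o\<^sub>L B o\<^sub>L B = id_blinfun"
      using c by (simp add: blinfun_compose_assoc BB A_eq blinfun_compose.scaleR_left
          blinfun_compose.scaleR_right neumann_series[OF T_norm])
    fix X assume "X o\<^sub>L A = A o\<^sub>L X"
    then have "X o\<^sub>L T = T o\<^sub>L X"
      by (simp add: T_def blinfun_compose.diff_left blinfun_compose.diff_right
          blinfun_compose.scaleR_left blinfun_compose.scaleR_right)
    then show "X o\<^sub>L B = B o\<^sub>L X"
      using inv_sqrt_id_minus_commute[OF T_norm]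
      by (simp add: B_def S_def blinfun_compose.scaleR_left blinfun_compose.scaleR_right)
  qed
qed

lemma inv_sqrt_unique:
  fixes A B B' :: "'a::real_inner \<Rightarrow>\<^sub>L 'a"
  assumes B: "pd_op B" "B o\<^sub>L B o\<^sub>L A = id_blinfun" "A o\<^sub>L B o\<^sub>L B = id_blinfun"
    and B_comm: "\<And>X. X o\<^sub>L A = A o\<^sub>L X \<Longrightarrow> X o\<^sub>L B = B o\<^sub>L X"
    and B': "pd_op B'" "B' o\<^sub>L B' o\<^sub>L A = id_blinfun" "A o\<^sub>L B' o\<^sub>L B' = id_blinfun"
  shows "B' = B"
proof -
  have B1: "B (B (A y)) = y" and B'1: "B' (B' (A y)) = y" and B'2: "A (B' (B' y)) = y" for y
    using arg_cong[OF B(2), of "\<lambda>F. F y"] arg_cong[OF B'(2), of "\<lambda>F. F y"]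
      arg_cong[OF B'(3), of "\<lambda>F. F y"] by simp_all
  \<comment> \<open>\<open>B'\<close> commutes with \<open>A\<close>, hence with \<open>B\<close>, and \<open>B\<^sup>2 = B'\<^sup>2 = A\<^sup>-\<^sup>1\<close>\<close>
  have "B' o\<^sub>L A = A o\<^sub>L B'"
  proof (rule blinfun_eqI)
    fix x
    have "A (B' x) = A (B' (B' (B' (A x))))" by (simp add: B'1)
    also have "\<dots> = B' (A x)" by (rule B'2)
    finally show "(B' o\<^sub>L A) x = (A o\<^sub>L B') x" by simp
  qed
  from B_comm[OF this] have BB': "B' (B x) = B (B' x)" for x
    using arg_cong[of _ _ "\<lambda>F. F x"] by (metis blinfun_apply_blinfun_compose)
  have BB: "B (B y) = B' (B' y)" for y
  proof -
    have "B (B y) = B (B (A (B' (B' y))))" by (simp only: B'2)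
    also have "\<dots> = B' (B' y)" by (rule B1)
    finally show ?thesis .
  qed
  show ?thesis
  proof (rule blinfun_eqI)
    fix x
    define z where "z = B x - B' x"
    have "B z + B' z = 0"
      by (simp add: z_def blinfun.diff_right BB BB')
    then have "B z \<bullet> z + B' z \<bullet> z = 0"
      by (metis inner_add_left inner_zero_left)
    moreover have "z \<noteq> 0 \<Longrightarrow> 0 < B z \<bullet> z" "z \<noteq> 0 \<Longrightarrow> 0 < B' z \<bullet> z"
      using B(1) B'(1) by (auto simp: pd_op_def)
    ultimately have "z = 0" by (metis add_pos_pos less_irrefl)
    then show "B' x = B x" by (simp add: z_def)
  qed
qed

lemma inv_sqrt_op_spec:
  fixes A :: "'a::{real_inner, complete_space} \<Rightarrow>\<^sub>L 'a"
  assumes "self_adjoint_op A" and "\<And>x. l * (norm x)\<^sup>2 \<le> A x \<bullet> x" and "l > 0"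
  shows "pd_op (inv_sqrt_op A)" "inv_sqrt_op A o\<^sub>L inv_sqrt_op A o\<^sub>L A = id_blinfun"
    "A o\<^sub>L inv_sqrt_op A o\<^sub>L inv_sqrt_op A = id_blinfun"
proof -
  obtain B where B: "pd_op B" "B o\<^sub>L B o\<^sub>L A = id_blinfun" "A o\<^sub>L B o\<^sub>L B = id_blinfun"
    and comm: "\<And>X. X o\<^sub>L A = A o\<^sub>L X \<Longrightarrow> X o\<^sub>L B = B o\<^sub>L X"
    using inv_sqrt_exists[OF assms] by blast
  have "\<exists>!B. pd_op B \<and> B o\<^sub>L B o\<^sub>L A = id_blinfun \<and> A o\<^sub>L B o\<^sub>L B = id_blinfun"
    using B inv_sqrt_unique[OF B comm] by blast
  from theI'[OF this] show "pd_op (inv_sqrt_op A)" "inv_sqrt_op A o\<^sub>L inv_sqrt_op A o\<^sub>L A = id_blinfun"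
    "A o\<^sub>L inv_sqrt_op A o\<^sub>L inv_sqrt_op A = id_blinfun"
    unfolding inv_sqrt_op_def by blast+
qed

lemma norm_le_inv_sqrt_op:
  fixes A :: "'a::{real_inner, complete_space} \<Rightarrow>\<^sub>L 'a"
  assumes sa: "self_adjoint_op A" and lb: "\<And>x. l * (norm x)\<^sup>2 \<le> A x \<bullet> x" and l: "l > 0"
  shows "norm y \<le> sqrt (norm A) * norm (inv_sqrt_op A y)"
proof -
  define B where "B = inv_sqrt_op A"
  define w where "w = B (B y)"
  have Aw: "A w = y"
    using arg_cong[OF inv_sqrt_op_spec(3)[OF assms], of "\<lambda>F. F y"] by (simp add: w_def B_def)
  have "0 \<le> A x \<bullet> x" for x
    using order_trans[OF _ lb[of x]] l by simp
  then have psd: "psd_op A"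
    using sa by (simp add: psd_op_def)
  have "(norm y)\<^sup>2 \<le> norm A * (norm (B y))\<^sup>2"
  proof (cases "norm A = 0")
    case True
    then show ?thesis using Aw by simp
  next
    case False
    then have "(norm (A w))\<^sup>2 \<le> norm A * (A w \<bullet> w)"
      by (intro psd_norm_apply_sq_le[OF psd] inner_apply_le_norm) simp
    also have "A w \<bullet> w = y \<bullet> w"
      by (simp only: Aw)
    also have "\<dots> = B y \<bullet> B y"
      using inv_sqrt_op_spec(1)[OF assms, folded B_def] by (simp add: w_def pd_op_def self_adjoint_op_def)
    finally show ?thesis
      by (simp add: Aw power2_norm_eq_inner)
  qed
  also have "\<dots> = (sqrt (norm A) * norm (B y))\<^sup>2"
    by (simp add: power_mult_distrib)
  finally show ?thesis
    unfolding B_def by (rule power2_le_imp_le) simp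
qed

lemma eigenvalue_pos_le_norm:
  fixes C :: "'a::real_inner \<Rightarrow>\<^sub>L 'a"
  assumes "is_eigenvalue C l" and "pd_op (C + l *\<^sub>R id_blinfun)"
  shows "0 < l" "l \<le> norm C"
proof -
  obtain x where x: "x \<noteq> 0" "C x = l *\<^sub>R x"
    using assms(1) by (auto simp: is_eigenvalue_def)
  have "0 < (C + l *\<^sub>R id_blinfun) x \<bullet> x"
    using assms(2) x(1) by (simp add: pd_op_def)
  then have "0 < (2 * l) * (x \<bullet> x)"
    using x(2) by (simp add: blinfun.add_left blinfun.scaleR_left algebra_simps)
  then show "0 < l"
    using inner_ge_zero[of x] by (auto simp: zero_less_mult_iff)
  have "\<bar>l\<bar> * norm x \<le> norm C * norm x"
    using norm_blinfun[of C x] x(2) by simp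
  then show "l \<le> norm C"
    using x(1) by simp
qed

section \<open>The self-normalised statistic\<close>

lemma T_WF_nonneg:
  assumes "2 \<le> n"
  shows "0 \<le> T_WF n X A l"
  unfolding T_WF_def Let_def using assms by (simp add: Max_ge_iff) (rule exI[of _ 1], simp)

lemma norm_centered_partial_sum_le_T_WF:
  fixes C :: "'a::{real_inner, complete_space} \<Rightarrow>\<^sub>L 'a" and X :: "nat \<Rightarrow> 'a"
  assumes psd: "psd_op C" and eig: "is_eigenvalue C l" and pd: "pd_op (C + l *\<^sub>R id_blinfun)"
    and k: "k \<in> {1..<n}"
  shows "norm (\<Sum>i=1..k. X i - (1 / real n) *\<^sub>R (\<Sum>i=1..n. X i))
    \<le> sqrt (real n) * (sqrt (2 * norm C) * T_WF n X C l)"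
proof -
  define A where "A = C + l *\<^sub>R id_blinfun"
  define y where "y = (1 / sqrt (real n)) *\<^sub>R (\<Sum>i=1..k. X i - (1 / real n) *\<^sub>R (\<Sum>i=1..n. X i))"
  have l: "0 < l" "l \<le> norm C"
    using eigenvalue_pos_le_norm[OF eig pd] by simp_all
  have sa: "self_adjoint_op A"
    using psd by (simp add: A_def self_adjoint_op_def psd_op_def blinfun.add_left blinfun.scaleR_left
        inner_add_left inner_add_right)
  have lb: "l * (norm x)\<^sup>2 \<le> A x \<bullet> x" for x
    using psd by (simp add: A_def psd_op_def blinfun.add_left blinfun.scaleR_left inner_add_left
        power2_norm_eq_inner)
  have "norm A \<le> norm C + norm (l *\<^sub>R (id_blinfun :: 'a \<Rightarrow>\<^sub>L 'a))"
    unfolding A_def by (rule norm_triangle_ineq)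
  also have "norm (l *\<^sub>R (id_blinfun :: 'a \<Rightarrow>\<^sub>L 'a)) \<le> l"
    using l(1) norm_blinfun_id_le[where 'a='a] by (simp add: mult_left_le)
  also have "norm C + l \<le> 2 * norm C"
    using l(2) by simp
  finally have norm_A: "norm A \<le> 2 * norm C"
    by simp
  have "norm y \<le> sqrt (norm A) * norm (inv_sqrt_op A y)"
    by (rule norm_le_inv_sqrt_op[OF sa lb l(1)])
  also have "\<dots> \<le> sqrt (2 * norm C) * T_WF n X C l"
  proof (rule mult_mono)
    show "norm (inv_sqrt_op A y) \<le> T_WF n X C l"
      unfolding T_WF_def Let_def A_def[symmetric] y_def using k by (intro Max_ge) auto
  qed (simp_all add: norm_A)
  finally have "norm y \<le> sqrt (2 * norm C) * T_WF n X C l" .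
  moreover have "norm (\<Sum>i=1..k. X i - (1 / real n) *\<^sub>R (\<Sum>i=1..n. X i)) = sqrt (real n) * norm y"
    using k by (simp add: y_def)
  ultimately show ?thesis
    by (simp add: mult_left_mono)
qed

lemma sum_atLeastAtMost_increment:
  fixes f :: "nat \<Rightarrow> 'a::ab_group_add"
  shows "(\<Sum>i=1..k + m. f i) - (\<Sum>i=1..k. f i) = (\<Sum>i\<in>{k<..k + m}. f i)"
proof -
  have "{1..k + m} = {1..k} \<union> {k<..k + m}" "{1..k} \<inter> {k<..k + m} = {}"
    by auto
  then show ?thesis
    by (simp add: sum.union_disjoint)
qed

lemma centered_partial_sum_increment:
  fixes X E :: "nat \<Rightarrow> 'a::real_vector" and \<gamma> :: "nat \<Rightarrow> real"
  assumes X: "\<And>i. X i = \<mu> + \<gamma> i *\<^sub>R \<Delta> + E i"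
  shows "(\<Sum>i=1..k + m. X i - Xb) - (\<Sum>i=1..k. X i - Xb)
    = real m *\<^sub>R (\<mu> - Xb) + (\<Sum>i\<in>{k<..k + m}. \<gamma> i) *\<^sub>R \<Delta> + ((\<Sum>i=1..k + m. E i) - (\<Sum>i=1..k. E i))"
proof -
  have "(\<Sum>i=1..k + m. X i - Xb) - (\<Sum>i=1..k. X i - Xb) = (\<Sum>i\<in>{k<..k + m}. (\<mu> - Xb) + \<gamma> i *\<^sub>R \<Delta> + E i)"
    unfolding sum_atLeastAtMost_increment by (intro sum.cong) (simp_all add: X algebra_simps)
  moreover have "(\<Sum>i=1..k + m. E i) - (\<Sum>i=1..k. E i) = (\<Sum>i\<in>{k<..k + m}. E i)"
    by (rule sum_atLeastAtMost_increment)
  ultimately show ?thesis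
    by (simp add: sum.distrib scaleR_sum_left sum_constant_scaleR)
qed

lemma window_contrast_le_T_WF:
  fixes X E :: "nat \<Rightarrow> 'a::{real_inner, complete_space}" and \<gamma> :: "nat \<Rightarrow> real"
  assumes X: "\<And>i. X i = \<mu> + \<gamma> i *\<^sub>R \<Delta> + E i"
    and psd: "psd_op C" and eig: "is_eigenvalue C l" and pd: "pd_op (C + l *\<^sub>R id_blinfun)"
    and m: "0 < m" "ka + m < n" "kb + m < n"
  shows "\<bar>(\<Sum>i\<in>{ka<..ka + m}. \<gamma> i) - (\<Sum>i\<in>{kb<..kb + m}. \<gamma> i)\<bar> * norm \<Delta>
    \<le> 4 * (sqrt (real n) * (sqrt (2 * norm C) * T_WF n X C l) + Max ((\<lambda>k. norm (\<Sum>i=1..k. E i)) ` {..n}))"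
proof -
  define Xb where "Xb = (1 / real n) *\<^sub>R (\<Sum>i=1..n. X i)"
  define V where "V k = (\<Sum>i=1..k. X i - Xb)" for k
  define P where "P k = (\<Sum>i=1..k. E i)" for k
  define \<tau> where "\<tau> = sqrt (real n) * (sqrt (2 * norm C) * T_WF n X C l)"
  define \<rho> where "\<rho> = Max ((\<lambda>k. norm (P k)) ` {..n})"
  have V: "norm (V k) \<le> \<tau>" if "k < n" for k
  proof (cases "k = 0")
    case True
    have "0 \<le> T_WF n X C l"
      using m by (intro T_WF_nonneg) simp
    then show ?thesis
      using True by (simp add: V_def \<tau>_def)
  next
    case False
    then show ?thesis
      using that norm_centered_partial_sum_le_T_WF[OF psd eig pd, of k n X]
      by (simp add: V_def Xb_def \<tau>_def)
  qed
  have P: "norm (P k) \<le> \<rho>" if "k \<le> n" for k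
    unfolding \<rho>_def using that by (intro Max_ge) auto
  have increment: "V (k + m) - V k = real m *\<^sub>R (\<mu> - Xb) + (\<Sum>i\<in>{k<..k + m}. \<gamma> i) *\<^sub>R \<Delta> + (P (k + m) - P k)" for k
    unfolding V_def P_def by (rule centered_partial_sum_increment[OF X])
  have "((\<Sum>i\<in>{ka<..ka + m}. \<gamma> i) - (\<Sum>i\<in>{kb<..kb + m}. \<gamma> i)) *\<^sub>R \<Delta>
      = ((V (ka + m) - V ka) - (V (kb + m) - V kb)) - ((P (ka + m) - P ka) - (P (kb + m) - P kb))"
    by (simp add: increment algebra_simps)
  also have "norm \<dots> \<le> (norm (V (ka + m)) + norm (V ka) + norm (V (kb + m)) + norm (V kb))
      + (norm (P (ka + m)) + norm (P ka) + norm (P (kb + m)) + norm (P kb))"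
  proof -
    have four: "norm ((a - b) - (c - d)) \<le> norm a + norm b + norm c + norm d" for a b c d :: 'a
      using norm_triangle_ineq4[of "a - b" "c - d"] norm_triangle_ineq4[of a b]
        norm_triangle_ineq4[of c d] by linarith
    show ?thesis
      by (rule order_trans[OF norm_triangle_ineq4 add_mono[OF four four]])
  qed
  also have "\<dots> \<le> 4 * (\<tau> + \<rho>)"
    using V[of "ka + m"] V[of ka] V[of "kb + m"] V[of kb] P[of "ka + m"] P[of ka] P[of "kb + m"] P[of kb] m
    by simp
  finally show ?thesis
    by (simp add: \<tau>_def \<rho>_def P_def)
qed

lemma T_WF_gt_of_window_contrast:
  fixes X E :: "nat \<Rightarrow> 'a::{real_inner, complete_space}" and \<gamma> :: "nat \<Rightarrow> real"
  assumes X: "\<And>i. X i = \<mu> + \<gamma> i *\<^sub>R \<Delta> + E i"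
    and psd: "psd_op C" and eig: "is_eigenvalue C l" and pd: "pd_op (C + l *\<^sub>R id_blinfun)"
    and m: "0 < m" "ka + m < n" "kb + m < n"
    and contrast: "c * real n \<le> \<bar>(\<Sum>i\<in>{ka<..ka + m}. \<gamma> i) - (\<Sum>i\<in>{kb<..kb + m}. \<gamma> i)\<bar>"
    and e: "0 \<le> e" "8 * sqrt (2 * e) * \<bar>K\<bar> \<le> c"
    and C_small: "norm C \<le> e * (real n * (norm \<Delta>)\<^sup>2)"
    and noise: "Max ((\<lambda>k. norm (\<Sum>i=1..k. E i)) ` {..n}) \<le> R * sqrt (real n)"
    and large: "8 * R < c * (sqrt (real n) * norm \<Delta>)"
  shows "K < T_WF n X C l"
proof (rule ccontr)
  assume "\<not> K < T_WF n X C l"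
  then have T_le: "T_WF n X C l \<le> \<bar>K\<bar>" by linarith
  define u where "u = sqrt (real n) * norm \<Delta>"
  have n: "0 < sqrt (real n)" "2 \<le> n"
    using m by simp_all
  have "2 * norm C \<le> (sqrt (2 * e) * u)\<^sup>2"
    using C_small e(1) by (simp add: u_def power_mult_distrib)
  then have "sqrt (2 * norm C) \<le> sqrt ((sqrt (2 * e) * u)\<^sup>2)"
    by (rule real_sqrt_le_mono)
  also have "\<dots> = sqrt (2 * e) * u"
    using e(1) by (simp add: u_def)
  finally have C_le: "sqrt (2 * norm C) \<le> sqrt (2 * e) * u" .
  have "sqrt (real n) * (c * u) = c * real n * norm \<Delta>"
    by (simp add: u_def algebra_simps)
  also have "\<dots> \<le> \<bar>(\<Sum>i\<in>{ka<..ka + m}. \<gamma> i) - (\<Sum>i\<in>{kb<..kb + m}. \<gamma> i)\<bar> * norm \<Delta>"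
    using contrast by (rule mult_right_mono) simp
  also have "\<dots> \<le> 4 * (sqrt (real n) * (sqrt (2 * norm C) * T_WF n X C l)
      + Max ((\<lambda>k. norm (\<Sum>i=1..k. E i)) ` {..n}))"
    by (rule window_contrast_le_T_WF[where X = X and E = E and \<gamma> = \<gamma>, OF X psd eig pd m])
  also have "\<dots> \<le> 4 * (sqrt (real n) * (sqrt (2 * norm C) * T_WF n X C l) + R * sqrt (real n))"
    using noise by simp
  also have "\<dots> \<le> 4 * (sqrt (real n) * (sqrt (2 * e) * u * \<bar>K\<bar>) + R * sqrt (real n))"
  proof -
    have "sqrt (2 * norm C) * T_WF n X C l \<le> sqrt (2 * e) * u * \<bar>K\<bar>"
      by (rule mult_mono[OF C_le T_le]) (use e(1) in \<open>simp_all add: u_def T_WF_nonneg[OF n(2)]\<close>)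
    then show ?thesis
      using n(1) by (simp add: mult_left_mono)
  qed
  also have "\<dots> = sqrt (real n) * (4 * (sqrt (2 * e) * u * \<bar>K\<bar>) + 4 * R)"
    by (simp add: algebra_simps)
  finally have "c * u \<le> 4 * (sqrt (2 * e) * u * \<bar>K\<bar>) + 4 * R"
    using n(1) by simp
  moreover have "8 * (sqrt (2 * e) * u * \<bar>K\<bar>) \<le> c * u"
    using mult_right_mono[OF e(2), of u] by (simp add: u_def mult_ac)
  ultimately show False
    using large by (simp add: u_def)
qed

section \<open>Windows of the drift profile\<close>

lemma continuous_on_convex_constant_from_interior:
  fixes g :: "'a::euclidean_space \<Rightarrow> 'b::t1_space"
  assumes I: "convex I" "interior I \<noteq> {}" and g: "continuous_on I g"
    and const: "\<And>u. u \<in> interior I \<Longrightarrow> g u = c" and t: "t \<in> I"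
  shows "g t = c"
proof -
  obtain T where T: "closed T" "{x \<in> I. g x = c} = I \<inter> T"
    using continuous_closedin_preimage_constant[OF g, of c] by (auto simp: closedin_closed)
  have "interior I \<subseteq> T"
    using T(2) const interior_subset by blast
  then have "closure I \<subseteq> T"
    using closure_minimal[OF _ T(1)] convex_closure_interior[OF I] by metis
  then show ?thesis
    using T(2) t closure_subset by blast
qed

lemma piecewise_continuous_01_continuity_points:
  fixes g :: "real \<Rightarrow> real"
  assumes pc: "piecewise_continuous_01 g" and nc: "\<exists>s\<in>{0..1}. \<exists>t\<in>{0..1}. g s \<noteq> g t"
  obtains a b where "a \<in> {0<..<1}" "b \<in> {0<..<1}" "isCont g a" "isCont g b" "g a \<noteq> g b"
proof -
  obtain Is where Is: "\<Union>Is = {0..1}"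
    "\<And>I. I \<in> Is \<Longrightarrow> is_interval I \<and> interior I \<noteq> {} \<and> continuous_on I g"
    using pc unfolding piecewise_continuous_01_def by blast
  have good: "u \<in> {0<..<1} \<and> isCont g u" if "I \<in> Is" "u \<in> interior I" for I u
  proof
    have "interior I \<subseteq> interior {0..1::real}"
      using Is(1) that(1) by (intro interior_mono) blast
    then show "u \<in> {0<..<1}"
      using that(2) by auto
    show "isCont g u"
      using Is(2)[OF that(1)] that(2) by (blast intro: continuous_on_interior)
  qed
  have "(0::real) \<in> \<Union>Is"
    using Is(1) by simp
  then obtain I0 where I0: "I0 \<in> Is"
    by blast
  obtain u0 where u0: "u0 \<in> interior I0"
    using Is(2)[OF I0] by blast
  show ?thesis
  proof (cases "\<exists>I\<in>Is. \<exists>u\<in>interior I. g u \<noteq> g u0")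
    case True
    then obtain I u where u: "I \<in> Is" "u \<in> interior I" "g u \<noteq> g u0"
      by blast
    show ?thesis
      by (rule that[of u u0]) (use good[OF u(1,2)] good[OF I0 u0] u(3) in simp_all)
  next
    case False
    have "g t = g u0" if "t \<in> {0..1}" for t
    proof -
      have "t \<in> \<Union>Is"
        using Is(1) that by simp
      then obtain I where I: "I \<in> Is" "t \<in> I"
        by blast
      have const: "g u = g u0" if "u \<in> interior I" for u
        using False I(1) that by blast
      from Is(2)[OF I(1)] have "is_interval I" "interior I \<noteq> {}" "continuous_on I g"
        by simp_all
      from continuous_on_convex_constant_from_interior[OF is_interval_convex[OF this(1)] this(2,3) const I(2)]
      show ?thesis .
    qed
    moreover obtain s t where "s \<in> {0..1}" "t \<in> {0..1}" "g s \<noteq> g t"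
      using nc by blast
    ultimately show ?thesis
      by simp
  qed
qed

lemma window_sum_near_continuity_point:
  fixes g :: "real \<Rightarrow> real"
  assumes a: "a \<in> {0<..<1}" "isCont g a" and e: "e > 0"
  obtains r where "r > 0"
    "\<And>m n. 0 < n \<Longrightarrow> real m \<le> r * real n \<Longrightarrow> \<exists>k. k + m < n \<and>
       \<bar>(\<Sum>i\<in>{k<..k + m}. g (real i / real n)) - real m * g a\<bar> \<le> real m * e"
proof -
  obtain d where d: "d > 0" "\<And>x. dist x a < d \<Longrightarrow> dist (g x) (g a) < e"
    using a(2) e unfolding continuous_at_eps_delta by blast
  define r where "r = min (d / 2) ((1 - a) / 2)"
  show ?thesis
  proof
    show "r > 0"
      using d a by (simp add: r_def)
    fix m n :: nat
    assume n: "0 < n" and m: "real m \<le> r * real n"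
    define k where "k = nat \<lfloor>a * real n\<rfloor>"
    have k: "real k \<le> a * real n" "a * real n < real k + 1"
      using a n by (simp_all add: k_def)
    have "real (k + m) \<le> (a + r) * real n"
      using m k by (simp add: algebra_simps)
    also have "\<dots> < real n"
    proof -
      have "r \<le> (1 - a) / 2"
        unfolding r_def by (rule min.cobounded2)
      then show ?thesis
        using a n by simp
    qed
    finally have km: "k + m < n" by simp
    have "\<bar>g (real i / real n) - g a\<bar> \<le> e" if i: "i \<in> {k<..k + m}" for i
    proof -
      have "a * real n < real i" "real i \<le> (a + r) * real n"
        using i k m by (auto simp: algebra_simps)
      then have "a < real i / real n" "real i / real n \<le> a + r"
        using n by (simp_all add: field_simps)
      moreover have "r < d"
        using d by (simp add: r_def)
      ultimately have "dist (real i / real n) a < d"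
        by (simp add: dist_real_def)
      then show ?thesis
        using d(2) by (fastforce simp: dist_real_def)
    qed
    then have "\<bar>(\<Sum>i\<in>{k<..k + m}. g (real i / real n) - g a)\<bar> \<le> (\<Sum>i\<in>{k<..k + m}. e)"
      by (intro order_trans[OF sum_abs sum_mono])
    then have "\<bar>(\<Sum>i\<in>{k<..k + m}. g (real i / real n) - g a)\<bar> \<le> real m * e"
      by simp
    then show "\<exists>k. k + m < n \<and> \<bar>(\<Sum>i\<in>{k<..k + m}. g (real i / real n)) - real m * g a\<bar> \<le> real m * e"
      using km by (auto simp: sum_subtractf)
  qed
qed

lemma window_sums_separated:
  fixes g :: "real \<Rightarrow> real"
  assumes pc: "piecewise_continuous_01 g" and nc: "\<exists>s\<in>{0..1}. \<exists>t\<in>{0..1}. g s \<noteq> g t"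
  obtains c N where "c > 0" "\<And>n. N \<le> n \<Longrightarrow> \<exists>ka kb m. 0 < m \<and> ka + m < n \<and> kb + m < n \<and>
      c * real n \<le> \<bar>(\<Sum>i\<in>{ka<..ka + m}. g (real i / real n)) - (\<Sum>i\<in>{kb<..kb + m}. g (real i / real n))\<bar>"
proof -
  obtain a b where ab: "a \<in> {0<..<1}" "b \<in> {0<..<1}" "isCont g a" "isCont g b" "g a \<noteq> g b"
    using piecewise_continuous_01_continuity_points[OF pc nc] by blast
  define \<delta> where "\<delta> = \<bar>g a - g b\<bar>"
  have \<delta>: "\<delta> / 4 > 0"
    using ab(5) by (simp add: \<delta>_def)
  obtain ra where ra: "ra > 0" "\<And>m n. 0 < n \<Longrightarrow> real m \<le> ra * real n \<Longrightarrow> \<exists>k. k + m < n \<and>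
       \<bar>(\<Sum>i\<in>{k<..k + m}. g (real i / real n)) - real m * g a\<bar> \<le> real m * (\<delta> / 4)"
    by (rule window_sum_near_continuity_point[OF ab(1,3) \<delta>]) blast
  obtain rb where rb: "rb > 0" "\<And>m n. 0 < n \<Longrightarrow> real m \<le> rb * real n \<Longrightarrow> \<exists>k. k + m < n \<and>
       \<bar>(\<Sum>i\<in>{k<..k + m}. g (real i / real n)) - real m * g b\<bar> \<le> real m * (\<delta> / 4)"
    by (rule window_sum_near_continuity_point[OF ab(2,4) \<delta>]) blast
  define r where "r = min ra rb"
  have r: "r > 0" "r \<le> ra" "r \<le> rb"
    using ra(1) rb(1) by (simp_all add: r_def)
  show ?thesis
  proof
    show "r * \<delta> / 4 > 0"
      using r \<delta> by simp
    fix n assume n: "nat \<lceil>2 / r\<rceil> + 1 \<le> n"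
    define m where "m = nat \<lfloor>r * real n\<rfloor>"
    have "2 / r < real n"
      using n by linarith
    then have rn: "2 < r * real n"
      using r by (simp add: field_simps)
    have m: "real m \<le> r * real n" "r * real n / 2 \<le> real m"
      using rn by (simp_all add: m_def) linarith
    then have "0 < real m"
      using rn by linarith
    then have "0 < m"
      by simp
    have "0 < n"
      using n by simp
    have "real m \<le> ra * real n" "real m \<le> rb * real n"
      using m(1) mult_right_mono[OF r(2), of "real n"] mult_right_mono[OF r(3), of "real n"] by simp_all
    then obtain ka kb where ka: "ka + m < n" "\<bar>(\<Sum>i\<in>{ka<..ka + m}. g (real i / real n)) - real m * g a\<bar> \<le> real m * (\<delta> / 4)"
      and kb: "kb + m < n" "\<bar>(\<Sum>i\<in>{kb<..kb + m}. g (real i / real n)) - real m * g b\<bar> \<le> real m * (\<delta> / 4)"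
      using ra(2)[OF \<open>0 < n\<close>] rb(2)[OF \<open>0 < n\<close>] by blast
    have "real m * \<delta> = \<bar>real m * g a - real m * g b\<bar>"
      by (simp add: \<delta>_def abs_mult flip: right_diff_distrib)
    then have "real m * \<delta> / 2 \<le> \<bar>(\<Sum>i\<in>{ka<..ka + m}. g (real i / real n)) - (\<Sum>i\<in>{kb<..kb + m}. g (real i / real n))\<bar>"
      using ka(2) kb(2) by linarith
    moreover have "r * \<delta> / 4 * real n \<le> real m * \<delta> / 2"
      using mult_right_mono[OF m(2), of "\<delta> / 2"] \<delta> by (simp add: field_simps)
    ultimately have "r * \<delta> / 4 * real n \<le>
        \<bar>(\<Sum>i\<in>{ka<..ka + m}. g (real i / real n)) - (\<Sum>i\<in>{kb<..kb + m}. g (real i / real n))\<bar>"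
      by (rule order_trans[rotated])
    then show "\<exists>ka kb m. 0 < m \<and> ka + m < n \<and> kb + m < n \<and> r * \<delta> / 4 * real n \<le>
        \<bar>(\<Sum>i\<in>{ka<..ka + m}. g (real i / real n)) - (\<Sum>i\<in>{kb<..kb + m}. g (real i / real n))\<bar>"
      using \<open>0 < m\<close> ka(1) kb(1) by blast
  qed
qed

section \<open>Maximal partial sums of the errors\<close>

lemma cadlag_eventually_bounded:
  fixes x :: "real \<Rightarrow> 'a::real_normed_vector"
  assumes x: "cadlag x" and t: "t \<in> {0..1}"
  shows "\<exists>B. eventually (\<lambda>s. s \<in> {0..1} \<longrightarrow> norm (x s) \<le> B) (at t)"
proof -
  have "\<exists>B. eventually (\<lambda>s. s \<in> {0..1} \<longrightarrow> norm (x s) \<le> B) (at_right t)"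
  proof (cases "t < 1")
    case True
    then have "(x \<longlongrightarrow> x t) (at_right t)"
      using x t by (simp add: cadlag_def continuous_within)
    from order_tendstoD(2)[OF tendsto_norm[OF this], of "norm (x t) + 1"]
    have "eventually (\<lambda>s. s \<in> {0..1} \<longrightarrow> norm (x s) \<le> norm (x t) + 1) (at_right t)"
      by (auto elim: eventually_mono)
    then show ?thesis ..
  next
    case False
    then have "eventually (\<lambda>s. s \<in> {0..1} \<longrightarrow> norm (x s) \<le> 0) (at_right t)"
      using eventually_at_right_less[of t] by eventually_elim (use t False in auto)
    then show ?thesis ..
  qed
  then obtain B1 where B1: "eventually (\<lambda>s. s \<in> {0..1} \<longrightarrow> norm (x s) \<le> B1) (at_right t)" ..
  have "\<exists>B. eventually (\<lambda>s. s \<in> {0..1} \<longrightarrow> norm (x s) \<le> B) (at_left t)"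
  proof (cases "0 < t")
    case True
    then have "t \<in> {0<..1}"
      using t by simp
    then obtain L where "(x \<longlongrightarrow> L) (at_left t)"
      using x unfolding cadlag_def by blast
    from order_tendstoD(2)[OF tendsto_norm[OF this], of "norm L + 1"]
    have "eventually (\<lambda>s. s \<in> {0..1} \<longrightarrow> norm (x s) \<le> norm L + 1) (at_left t)"
      by (auto elim: eventually_mono)
    then show ?thesis ..
  next
    case False
    then have "t = 0"
      using t by simp
    then have "eventually (\<lambda>s. s \<in> {-1<..<0}) (at_left t)"
      using eventually_at_left_real[of "-1" 0] by simp
    then have "eventually (\<lambda>s. s \<in> {0..1} \<longrightarrow> norm (x s) \<le> 0) (at_left t)"
      by eventually_elim auto
    then show ?thesis ..
  qed
  then obtain B2 where B2: "eventually (\<lambda>s. s \<in> {0..1} \<longrightarrow> norm (x s) \<le> B2) (at_left t)" ..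
  have "eventually (\<lambda>s. s \<in> {0..1} \<longrightarrow> norm (x s) \<le> max B1 B2) (at t)"
    unfolding eventually_at_split using B1 B2 by (auto elim: eventually_mono)
  then show ?thesis ..
qed

lemma cadlag_bounded:
  fixes x :: "real \<Rightarrow> 'a::real_normed_vector"
  assumes x: "cadlag x"
  obtains B where "\<And>t. t \<in> {0..1} \<Longrightarrow> norm (x t) \<le> B"
proof -
  have "\<exists>d B. d > 0 \<and> (\<forall>s\<in>{0..1}. dist s t < d \<longrightarrow> norm (x s) \<le> B)" if t: "t \<in> {0..1}" for t
  proof -
    obtain B where "eventually (\<lambda>s. s \<in> {0..1} \<longrightarrow> norm (x s) \<le> B) (at t)"
      using cadlag_eventually_bounded[OF x t] ..
    then obtain d where "d > 0" "\<forall>s. s \<noteq> t \<and> dist s t < d \<longrightarrow> s \<in> {0..1} \<longrightarrow> norm (x s) \<le> B"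
      unfolding eventually_at by auto
    then have "\<forall>s\<in>{0..1}. dist s t < d \<longrightarrow> norm (x s) \<le> max B (norm (x t))"
      by (auto simp: le_max_iff_disj)
    with \<open>d > 0\<close> show ?thesis by blast
  qed
  then obtain d B where d: "\<And>t. t \<in> {0..1} \<Longrightarrow> d t > 0"
    and B: "\<And>t s. t \<in> {0..1} \<Longrightarrow> s \<in> {0..1} \<Longrightarrow> dist s t < d t \<Longrightarrow> norm (x s) \<le> B t"
    by metis
  have "{0..1::real} \<subseteq> (\<Union>t\<in>{0..1}. ball t (d t))"
    using d by force
  then obtain F where F: "F \<subseteq> {0..1}" "finite F" "{0..1::real} \<subseteq> (\<Union>t\<in>F. ball t (d t))"
    by (rule compactE_image[OF compact_Icc open_ball])
  show ?thesis
  proof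
    fix s :: real assume s: "s \<in> {0..1}"
    then obtain t where t: "t \<in> F" "dist s t < d t"
      using F(3) by (auto simp: dist_commute)
    then have "norm (x s) \<le> B t"
      using B[of t s] F(1) s by blast
    also have "\<dots> \<le> Max (B ` F)"
      using F(2) t(1) by simp
    finally show "norm (x s) \<le> Max (B ` F)" .
  qed
qed

definition sup_norm_01 :: "(real \<Rightarrow> 'a::real_normed_vector) \<Rightarrow> real" where
  "sup_norm_01 x = (SUP t\<in>{0..1}. norm (x t))"

lemma norm_le_sup_norm_01:
  assumes "\<And>t. t \<in> {0..1} \<Longrightarrow> norm (x t) \<le> B" and "t \<in> {0..1}"
  shows "norm (x t) \<le> sup_norm_01 x"
  unfolding sup_norm_01_def by (rule cSUP_upper[OF assms(2) bdd_aboveI2[OF assms(1)]])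

lemma sup_norm_01_le:
  assumes "\<And>t. t \<in> {0..1} \<Longrightarrow> norm (x t) \<le> C"
  shows "sup_norm_01 x \<le> C"
  unfolding sup_norm_01_def using assms by (intro cSUP_least) auto

lemma sup_norm_01_diff_le_skorokhod_dist:
  fixes x y :: "real \<Rightarrow> 'a::real_normed_vector"
  assumes x: "cadlag x" and y: "cadlag y"
  shows "\<bar>sup_norm_01 x - sup_norm_01 y\<bar> \<le> skorokhod_dist x y"
  unfolding skorokhod_dist_def
proof (rule cINF_greatest)
  show "time_changes \<noteq> {}"
    by (auto simp: time_changes_def intro!: exI[of _ "\<lambda>t. t"] strict_mono_onI continuous_on_id)
  fix \<tau> assume "\<tau> \<in> time_changes"
  then have \<tau>: "strict_mono_on {0..1} \<tau>" "continuous_on {0..1} \<tau>" "\<tau> 0 = 0" "\<tau> 1 = 1"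
    by (auto simp: time_changes_def)
  have range: "\<tau> t \<in> {0..1}" if "t \<in> {0..1}" for t
    using strict_mono_on_leD[OF \<tau>(1), of 0 t] strict_mono_on_leD[OF \<tau>(1), of t 1] that \<tau>(3,4) by auto
  obtain Bx By where Bx: "\<And>t. t \<in> {0..1} \<Longrightarrow> norm (x t) \<le> Bx"
    and By: "\<And>t. t \<in> {0..1} \<Longrightarrow> norm (y t) \<le> By"
    using cadlag_bounded[OF x] cadlag_bounded[OF y] by metis
  define D where "D = (SUP t\<in>{0..1}. norm (x t - y (\<tau> t)))"
  have D: "norm (x t - y (\<tau> t)) \<le> D" if "t \<in> {0..1}" for t
    unfolding D_def using that
  proof (intro cSUP_upper bdd_aboveI2)
    fix s :: real assume "s \<in> {0..1}"
    then show "norm (x s - y (\<tau> s)) \<le> Bx + By"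
      using Bx[of s] By[OF range] norm_triangle_ineq4[of "x s" "y (\<tau> s)"] by fastforce
  qed
  have "sup_norm_01 x \<le> sup_norm_01 y + D"
  proof (rule sup_norm_01_le)
    fix t :: real assume t: "t \<in> {0..1}"
    have "norm (x t) \<le> norm (y (\<tau> t)) + norm (x t - y (\<tau> t))"
      using norm_triangle_ineq[of "y (\<tau> t)" "x t - y (\<tau> t)"] by simp
    also have "\<dots> \<le> sup_norm_01 y + D"
      using norm_le_sup_norm_01[of y By, OF By range[OF t]] D[OF t] by linarith
    finally show "norm (x t) \<le> sup_norm_01 y + D" .
  qed
  moreover have "sup_norm_01 y \<le> sup_norm_01 x + D"
  proof (rule sup_norm_01_le)
    fix s :: real assume s: "s \<in> {0..1}"
    obtain t where t: "t \<in> {0..1}" "\<tau> t = s"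
      using IVT'[of \<tau> 0 s 1] \<tau> s by auto
    have "norm (y s) \<le> norm (x t) + norm (x t - y (\<tau> t))"
      using norm_triangle_ineq4[of "x t" "x t - y (\<tau> t)"] t(2) by simp
    also have "\<dots> \<le> sup_norm_01 x + D"
      using norm_le_sup_norm_01[of x Bx, OF Bx t(1)] D[OF t(1)] by linarith
    finally show "norm (y s) \<le> sup_norm_01 x + D" .
  qed
  ultimately show "\<bar>sup_norm_01 x - sup_norm_01 y\<bar> \<le> max (SUP t\<in>{0..1}. \<bar>\<tau> t - t\<bar>) D"
    by linarith
qed

text \<open>Weak convergence in \<open>D[0,1]\<close> is tested against bounded continuous functionals only; this one
  dominates the indicator of \<open>sup_norm_01 x > L + 1\<close>.\<close>
definition sup_norm_ramp :: "real \<Rightarrow> (real \<Rightarrow> 'a::real_normed_vector) \<Rightarrow> real" where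
  "sup_norm_ramp L x = min 1 (max 0 (sup_norm_01 x - L))"

lemma bounded_continuous_on_D_sup_norm_ramp:
  "bounded_continuous_on_D (sup_norm_ramp L :: (real \<Rightarrow> 'a::real_normed_vector) \<Rightarrow> real)"
  unfolding bounded_continuous_on_D_def
proof (intro conjI allI impI exI)
  fix x :: "real \<Rightarrow> 'a"
  show "\<bar>sup_norm_ramp L x\<bar> \<le> 1"
    by (simp add: sup_norm_ramp_def)
  fix e :: real and y assume "cadlag x" "0 < e" "cadlag y" "skorokhod_dist x y < e"
  have "\<bar>min 1 (max 0 a) - min 1 (max 0 b)\<bar> \<le> \<bar>a - b\<bar>" for a b :: real
    by (simp add: min_def max_def abs_if)
  then have "\<bar>sup_norm_ramp L x - sup_norm_ramp L y\<bar> \<le> \<bar>sup_norm_01 x - sup_norm_01 y\<bar>"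
    unfolding sup_norm_ramp_def by (metis diff_diff_eq2 diff_add_cancel)
  also have "\<dots> < e"
    using sup_norm_01_diff_le_skorokhod_dist[OF \<open>cadlag x\<close> \<open>cadlag y\<close>] \<open>skorokhod_dist x y < e\<close>
    by (rule le_less_trans)
  finally show "\<bar>sup_norm_ramp L x - sup_norm_ramp L y\<bar> < e" .
qed

lemma sup_norm_01_step_process:
  fixes f :: "nat \<Rightarrow> 'a::real_normed_vector"
  assumes n: "0 < n"
  shows "sup_norm_01 (\<lambda>t. (1 / sqrt (real n)) *\<^sub>R (\<Sum>i=1..nat \<lfloor>t * real n\<rfloor>. f i))
       = Max ((\<lambda>k. norm (\<Sum>i=1..k. f i)) ` {..n}) / sqrt (real n)"
proof -
  define F where "F k = norm (\<Sum>i=1..k. f i) / sqrt (real n)" for k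
  have floor: "nat \<lfloor>t * real n\<rfloor> \<in> {..n}" if "t \<in> {0..1}" for t
  proof -
    have "t * real n \<le> real n"
      using that by (simp add: mult_left_le_one_le)
    then show ?thesis
      by (simp add: nat_le_iff floor_le_iff)
  qed
  have "(\<lambda>t. norm ((1 / sqrt (real n)) *\<^sub>R (\<Sum>i=1..nat \<lfloor>t * real n\<rfloor>. f i))) ` {0..1}
      = F ` {..n}"
  proof (intro equalityI subsetI)
    fix y assume "y \<in> (\<lambda>t. norm ((1 / sqrt (real n)) *\<^sub>R (\<Sum>i=1..nat \<lfloor>t * real n\<rfloor>. f i))) ` {0..1}"
    then obtain t where "t \<in> {0..1}" "y = F (nat \<lfloor>t * real n\<rfloor>)"
      by (auto simp: F_def)
    then show "y \<in> F ` {..n}"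
      using floor by blast
  next
    fix y assume "y \<in> F ` {..n}"
    then obtain k where k: "k \<le> n" "y = F k"
      by blast
    moreover have "nat \<lfloor>real k / real n * real n\<rfloor> = k"
      using n by simp
    ultimately show "y \<in> (\<lambda>t. norm ((1 / sqrt (real n)) *\<^sub>R (\<Sum>i=1..nat \<lfloor>t * real n\<rfloor>. f i))) ` {0..1}"
      using n by (intro image_eqI[of _ _ "real k / real n"]) (auto simp: F_def)
  qed
  then have "sup_norm_01 (\<lambda>t. (1 / sqrt (real n)) *\<^sub>R (\<Sum>i=1..nat \<lfloor>t * real n\<rfloor>. f i))
      = Max ((\<lambda>r. r / sqrt (real n)) ` (\<lambda>k. norm (\<Sum>i=1..k. f i)) ` {..n})"
    unfolding sup_norm_01_def by (simp add: cSup_eq_Max F_def image_image)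
  also have "\<dots> = Max ((\<lambda>k. norm (\<Sum>i=1..k. f i)) ` {..n}) / sqrt (real n)"
    by (rule mono_Max_commute[symmetric]) (auto intro!: monoI divide_right_mono)
  finally show ?thesis .
qed

lemma sup_norm_01_eq_SUP_rationals:
  fixes f :: "real \<Rightarrow> 'a::real_normed_vector"
  assumes f: "continuous_on {0..1} f"
  shows "sup_norm_01 f = (SUP t\<in>{0<..<1} \<inter> \<rat>. norm (f t))"
proof -
  let ?D = "{0<..<1::real} \<inter> \<rat>"
  have "bounded (f ` {0..1})"
    by (rule compact_imp_bounded[OF compact_continuous_image[OF f compact_Icc]])
  then obtain B where B: "\<forall>t\<in>{0..1}. norm (f t) \<le> B"
    by (auto simp: bounded_iff)
  have D: "?D \<subseteq> {0..1}" "?D \<noteq> {}"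
    using Rats_dense_in_real[of 0 1] by auto
  have bdd: "bdd_above ((\<lambda>t. norm (f t)) ` ?D)"
    using B D(1) by (intro bdd_aboveI2[of _ _ B]) auto
  define s where "s = (SUP t\<in>?D. norm (f t))"
  \<comment> \<open>\<open>?D\<close> is dense in \<open>[0,1]\<close>, and \<open>{t. norm (f t) \<le> s}\<close> is closed in \<open>[0,1]\<close>\<close>
  have closed: "closed ({0..1} \<inter> (\<lambda>t. norm (f t)) -` {..s})"
    by (intro continuous_closed_preimage continuous_on_norm f) auto
  have "{0<..<1::real} \<inter> closure \<rat> \<subseteq> closure ?D"
    by (rule open_Int_closure_subset) simp
  then have "{0<..<1::real} \<subseteq> closure ?D"
    by (simp add: Rats_closure_real)
  then have "closure {0<..<1::real} \<subseteq> closure ?D"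
    by (rule closure_minimal[OF _ closed_closure])
  also have "closure ?D \<subseteq> {0..1} \<inter> (\<lambda>t. norm (f t)) -` {..s}"
    using D(1) cSUP_upper[OF _ bdd] by (intro closure_minimal closed) (auto simp: s_def)
  finally have "sup_norm_01 f \<le> s"
    by (intro sup_norm_01_le) auto
  moreover have "s \<le> sup_norm_01 f"
    unfolding s_def sup_norm_01_def using B D by (intro cSUP_subset_mono) (auto intro: bdd_aboveI2)
  ultimately show ?thesis
    by (simp add: s_def)
qed

lemma borel_measurable_sup_norm_01:
  fixes W :: "real \<Rightarrow> 'w \<Rightarrow> 'a::real_normed_vector"
  assumes meas: "\<And>t. W t \<in> borel_measurable N"
    and cont: "\<And>\<omega>. \<omega> \<in> space N \<Longrightarrow> continuous_on {0..1} (\<lambda>t. W t \<omega>)"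
  shows "(\<lambda>\<omega>. sup_norm_01 (\<lambda>t. W t \<omega>)) \<in> borel_measurable N"
proof -
  have "(\<lambda>\<omega>. SUP t\<in>{0<..<1} \<inter> \<rat>. norm (W t \<omega>)) \<in> borel_measurable N"
  proof (rule borel_measurable_cSUP)
    show "countable ({0<..<1::real} \<inter> \<rat>)"
      by (simp add: countable_rat)
    show "(\<lambda>\<omega>. norm (W t \<omega>)) \<in> borel_measurable N" for t
      using meas by measurable
    fix \<omega> assume "\<omega> \<in> space N"
    then have "bounded ((\<lambda>t. W t \<omega>) ` {0..1})"
      by (rule compact_imp_bounded[OF compact_continuous_image[OF cont compact_Icc]])
    then obtain B where "\<forall>t\<in>{0..1}. norm (W t \<omega>) \<le> B"
      by (auto simp: bounded_iff)
    then show "bdd_above ((\<lambda>t. norm (W t \<omega>)) ` ({0<..<1} \<inter> \<rat>))"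
      by (intro bdd_aboveI2) auto
  qed
  then show ?thesis
    by (rule measurable_cong[THEN iffD1, rotated]) (simp add: sup_norm_01_eq_SUP_rationals cont)
qed

lemma integral_ramp_tendsto_zero:
  assumes "prob_space N" and h: "h \<in> borel_measurable N"
  shows "(\<lambda>L::nat. \<integral>\<omega>. min 1 (max 0 (h \<omega> - real L)) \<partial>N) \<longlonglongrightarrow> 0"
proof -
  interpret N: prob_space N by (fact assms(1))
  have "(\<lambda>L::nat. \<integral>\<omega>. min 1 (max 0 (h \<omega> - real L)) \<partial>N) \<longlonglongrightarrow> (\<integral>\<omega>. 0 \<partial>N)"
  proof (rule integral_dominated_convergence[where w = "\<lambda>_. 1"])
    show "AE \<omega> in N. (\<lambda>L. min 1 (max 0 (h \<omega> - real L))) \<longlonglongrightarrow> 0"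
    proof (rule AE_I2)
      fix \<omega>
      obtain L0 :: nat where "h \<omega> \<le> real L0"
        using real_arch_simple by blast
      then have "eventually (\<lambda>L. min 1 (max 0 (h \<omega> - real L)) = 0) sequentially"
        unfolding eventually_sequentially by (intro exI[of _ L0]) auto
      then show "(\<lambda>L. min 1 (max 0 (h \<omega> - real L))) \<longlonglongrightarrow> 0"
        by (rule tendsto_eventually)
    qed
  qed (use h in auto)
  then show ?thesis
    by simp
qed

lemma measure_max_partial_sums_le_integral_ramp:
  fixes \<epsilon> :: "int \<Rightarrow> 'a \<Rightarrow> 'h::{real_normed_vector, second_countable_topology}"
  assumes M: "prob_space M" and \<epsilon>: "\<And>i. \<epsilon> i \<in> borel_measurable M" and n: "0 < n"
  shows "measure M {\<omega>\<in>space M. (L + 1) * sqrt (real n) < Max ((\<lambda>k. norm (\<Sum>i=1..k. \<epsilon> (int i) \<omega>)) ` {..n})}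
    \<le> (\<integral>\<omega>. sup_norm_ramp L (\<lambda>t. (1 / sqrt (real n)) *\<^sub>R (\<Sum>i=1..nat \<lfloor>t * real n\<rfloor>. \<epsilon> (int i) \<omega>)) \<partial>M)"
    (is "measure M ?B \<le> (\<integral>\<omega>. ?ramp \<omega> \<partial>M)")
proof -
  interpret M: prob_space M by (fact M)
  define Q where "Q \<omega> = Max ((\<lambda>k. norm (\<Sum>i=1..k. \<epsilon> (int i) \<omega>)) ` {..n})" for \<omega>
  have [measurable]: "\<epsilon> i \<in> borel_measurable M" for i
    by (fact \<epsilon>)
  have ramp: "?ramp \<omega> = min 1 (max 0 (Q \<omega> / sqrt (real n) - L))" for \<omega>
    using sup_norm_01_step_process[OF n, of "\<lambda>i. \<epsilon> (int i) \<omega>"] by (simp add: sup_norm_ramp_def Q_def)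
  have "measure M ?B = (\<integral>\<omega>. indicator ?B \<omega> \<partial>M)"
    by simp
  also have "\<dots> \<le> (\<integral>\<omega>. ?ramp \<omega> \<partial>M)"
  proof (rule integral_mono)
    show "integrable M ?ramp"
      unfolding ramp Q_def by (intro M.integrable_const_bound[where B = 1]) auto
    show "indicator ?B \<omega> \<le> ?ramp \<omega>" for \<omega>
    proof (cases "\<omega> \<in> ?B")
      case True
      then have "L + 1 < Q \<omega> / sqrt (real n)"
        using n by (simp add: pos_less_divide_eq Q_def)
      then show ?thesis
        using True unfolding ramp by simp
    qed (unfold ramp, simp)
  qed (intro M.integrable_const_bound[where B = 1]; simp)
  finally show ?thesis .
qed

lemma max_partial_sums_bounded_in_probability:
  fixes M :: "'a measure" and \<epsilon> :: "int \<Rightarrow> 'a \<Rightarrow> 'h::{real_normed_vector, second_countable_topology}"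
    and N :: "'w measure" and W :: "real \<Rightarrow> 'w \<Rightarrow> 'h"
  assumes M: "prob_space M" and \<epsilon>: "\<And>i. \<epsilon> i \<in> borel_measurable M"
    and N: "prob_space N" and W: "\<And>t. W t \<in> borel_measurable N"
    and W_cont: "\<And>\<omega>. \<omega> \<in> space N \<Longrightarrow> continuous_on {0..1} (\<lambda>t. W t \<omega>)"
    and conv: "weak_conv_D M (\<lambda>n \<omega> t. (1 / sqrt (real n)) *\<^sub>R (\<Sum>i=1..nat \<lfloor>t * real n\<rfloor>. \<epsilon> (int i) \<omega>))
      N (\<lambda>\<omega> t. W t \<omega>)"
    and \<eta>: "\<eta> > 0"
  obtains R where "eventually (\<lambda>n. measure M {\<omega>\<in>space M.
      R * sqrt (real n) < Max ((\<lambda>k. norm (\<Sum>i=1..k. \<epsilon> (int i) \<omega>)) ` {..n})} < \<eta>) sequentially"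
proof -
  have "(\<lambda>L::nat. \<integral>\<omega>. sup_norm_ramp (real L) (\<lambda>t. W t \<omega>) \<partial>N) \<longlonglongrightarrow> 0"
    using integral_ramp_tendsto_zero[OF N borel_measurable_sup_norm_01[OF W W_cont]]
    by (simp add: sup_norm_ramp_def)
  from order_tendstoD(2)[OF this \<eta>]
  obtain L :: nat where L: "(\<integral>\<omega>. sup_norm_ramp (real L) (\<lambda>t. W t \<omega>) \<partial>N) < \<eta>"
    by (auto simp: eventually_sequentially)
  have "(\<lambda>n. \<integral>\<omega>. sup_norm_ramp (real L)
      (\<lambda>t. (1 / sqrt (real n)) *\<^sub>R (\<Sum>i=1..nat \<lfloor>t * real n\<rfloor>. \<epsilon> (int i) \<omega>)) \<partial>M)
    \<longlonglongrightarrow> (\<integral>\<omega>. sup_norm_ramp (real L) (\<lambda>t. W t \<omega>) \<partial>N)"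
    using conv bounded_continuous_on_D_sup_norm_ramp unfolding weak_conv_D_def by blast
  from order_tendstoD(2)[OF this L] eventually_gt_at_top[of 0]
  have "eventually (\<lambda>n. measure M {\<omega>\<in>space M.
      (real L + 1) * sqrt (real n) < Max ((\<lambda>k. norm (\<Sum>i=1..k. \<epsilon> (int i) \<omega>)) ` {..n})} < \<eta>) sequentially"
  proof eventually_elim
    case (elim n)
    show ?case
      by (rule le_less_trans[OF measure_max_partial_sums_le_integral_ramp[OF M \<epsilon> elim(2)] elim(1)])
  qed
  then show ?thesis
    by (rule that)
qed

section \<open>Consistency\<close>

lemma outer_prob_le_measure:
  assumes "B \<in> sets M" "A \<subseteq> B"
  shows "outer_prob M A \<le> measure M B"
  unfolding outer_prob_def using assms by (intro cInf_lower bdd_belowI[of _ 0]) auto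

lemma outer_prob_nonneg:
  assumes "A \<subseteq> space M"
  shows "0 \<le> outer_prob M A"
  unfolding outer_prob_def using assms sets.top by (intro cInf_greatest) auto

lemma outer_prob_tendsto_zeroI:
  assumes "\<And>n. A n \<subseteq> space M"
    and "\<And>\<eta>. \<eta> > 0 \<Longrightarrow> eventually (\<lambda>n. \<exists>B\<in>sets M. A n \<subseteq> B \<and> measure M B < \<eta>) sequentially"
  shows "(\<lambda>n. outer_prob M (A n)) \<longlonglongrightarrow> 0"
proof (rule order_tendstoI)
  fix a :: real assume "a < 0"
  then show "eventually (\<lambda>n. a < outer_prob M (A n)) sequentially"
    using outer_prob_nonneg[OF assms(1)] by (auto intro!: always_eventually intro: less_le_trans)
next
  fix \<eta> :: real assume "0 < \<eta>"
  from assms(2)[OF this] show "eventually (\<lambda>n. outer_prob M (A n) < \<eta>) sequentially"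
    by eventually_elim (use outer_prob_le_measure le_less_trans in blast)
qed

locale mean_change_model = prob_space M for M :: "'a measure" +
  fixes \<epsilon> :: "int \<Rightarrow> 'a \<Rightarrow> 'h::{real_inner, polish_space}"
    and \<mu> :: 'h and \<Delta> :: "nat \<Rightarrow> 'h" and g :: "real \<Rightarrow> real"
    and X :: "nat \<Rightarrow> nat \<Rightarrow> 'a \<Rightarrow> 'h"
    and Chat :: "nat \<Rightarrow> 'a \<Rightarrow> ('h \<Rightarrow>\<^sub>L 'h)" and lam1 :: "nat \<Rightarrow> 'a \<Rightarrow> real"
    and N :: "'w measure" and W :: "real \<Rightarrow> 'w \<Rightarrow> 'h"
  assumes X_def: "\<And>n i \<omega>. X n i \<omega> = \<mu> + g (real i / real n) *\<^sub>R \<Delta> n + \<epsilon> (int i) \<omega>"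
    and g_nonconst: "\<exists>s\<in>{0..1}. \<exists>t\<in>{0..1}. g s \<noteq> g t"
    and g_pc: "piecewise_continuous_01 g"
    and eps_meas: "\<And>i. \<epsilon> i \<in> borel_measurable M"
    and N: "prob_space N"
    and W_meas: "\<And>t. W t \<in> borel_measurable N"
    and W_cont: "\<And>\<omega>. \<omega> \<in> space N \<Longrightarrow> continuous_on {0..1} (\<lambda>t. W t \<omega>)"
    and fclt: "weak_conv_D M (\<lambda>n \<omega> t. (1 / sqrt (real n)) *\<^sub>R (\<Sum>i=1..nat \<lfloor>t * real n\<rfloor>. \<epsilon> (int i) \<omega>))
      N (\<lambda>\<omega> t. W t \<omega>)"
    and Chat_meas: "\<And>n. Chat n \<in> borel_measurable M"
    and Chat_psd: "\<And>n \<omega>. psd_op (Chat n \<omega>)"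
    and lam1: "\<And>n \<omega>. is_eigenvalue (Chat n \<omega>) (lam1 n \<omega>)"
    and Chat_pd: "\<And>n \<omega>. pd_op (Chat n \<omega> + lam1 n \<omega> *\<^sub>R id_blinfun)"
    and Chat_small: "\<And>e. e > 0 \<Longrightarrow>
      (\<lambda>n. measure M {\<omega>\<in>space M. norm (Chat n \<omega>) > e * (real n * (norm (\<Delta> n))\<^sup>2)}) \<longlonglongrightarrow> 0"
    and Delta_large: "filterlim (\<lambda>n. sqrt (real n) * norm (\<Delta> n)) at_top sequentially"
begin

lemma T_WF_le_subset:
  assumes e: "0 \<le> e" "8 * sqrt (2 * e) * \<bar>K\<bar> \<le> c"
    and window: "0 < m" "ka + m < n" "kb + m < n"
      "c * real n \<le> \<bar>(\<Sum>i\<in>{ka<..ka + m}. g (real i / real n)) - (\<Sum>i\<in>{kb<..kb + m}. g (real i / real n))\<bar>"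
    and large: "8 * R < c * (sqrt (real n) * norm (\<Delta> n))"
  shows "{\<omega>\<in>space M. T_WF n (\<lambda>i. X n i \<omega>) (Chat n \<omega>) (lam1 n \<omega>) \<le> K}
    \<subseteq> {\<omega>\<in>space M. norm (Chat n \<omega>) > e * (real n * (norm (\<Delta> n))\<^sup>2)}
      \<union> {\<omega>\<in>space M. R * sqrt (real n) < Max ((\<lambda>k. norm (\<Sum>i=1..k. \<epsilon> (int i) \<omega>)) ` {..n})}"
proof
  fix \<omega> assume "\<omega> \<in> {\<omega>\<in>space M. T_WF n (\<lambda>i. X n i \<omega>) (Chat n \<omega>) (lam1 n \<omega>) \<le> K}"
  then have \<omega>: "\<omega> \<in> space M" "\<not> K < T_WF n (\<lambda>i. X n i \<omega>) (Chat n \<omega>) (lam1 n \<omega>)"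
    by auto
  have "\<not> (norm (Chat n \<omega>) \<le> e * (real n * (norm (\<Delta> n))\<^sup>2) \<and>
      Max ((\<lambda>k. norm (\<Sum>i=1..k. \<epsilon> (int i) \<omega>)) ` {..n}) \<le> R * sqrt (real n))"
    using T_WF_gt_of_window_contrast[where \<gamma> = "\<lambda>i. g (real i / real n)" and E = "\<lambda>i. \<epsilon> (int i) \<omega>",
        OF X_def Chat_psd lam1 Chat_pd window e _ _ large] \<omega>(2) by blast
  then show "\<omega> \<in> {\<omega>\<in>space M. norm (Chat n \<omega>) > e * (real n * (norm (\<Delta> n))\<^sup>2)}
      \<union> {\<omega>\<in>space M. R * sqrt (real n) < Max ((\<lambda>k. norm (\<Sum>i=1..k. \<epsilon> (int i) \<omega>)) ` {..n})}"
    using \<omega>(1) by (simp only: Un_iff mem_Collect_eq not_le de_Morgan_conj simp_thms)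
qed

lemma outer_prob_T_WF_le_tendsto_zero:
  "(\<lambda>n. outer_prob M {\<omega>\<in>space M. T_WF n (\<lambda>i. X n i \<omega>) (Chat n \<omega>) (lam1 n \<omega>) \<le> K}) \<longlonglongrightarrow> 0"
proof -
  obtain c N0 where c: "c > 0" and windows: "\<And>n. N0 \<le> n \<Longrightarrow> \<exists>ka kb m. 0 < m \<and> ka + m < n \<and> kb + m < n \<and>
      c * real n \<le> \<bar>(\<Sum>i\<in>{ka<..ka + m}. g (real i / real n)) - (\<Sum>i\<in>{kb<..kb + m}. g (real i / real n))\<bar>"
    by (rule window_sums_separated[OF g_pc g_nonconst]) blast
  define e where "e = (c / (8 * (\<bar>K\<bar> + 1)))\<^sup>2 / 2"
  have "sqrt (2 * e) = c / (8 * (\<bar>K\<bar> + 1))"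
    using c by (simp add: e_def)
  then have "8 * sqrt (2 * e) * \<bar>K\<bar> = c * (\<bar>K\<bar> / (\<bar>K\<bar> + 1))"
    by (simp add: field_simps)
  also have "\<dots> \<le> c"
    using c by (intro mult_left_le) simp_all
  finally have e: "0 < e" "8 * sqrt (2 * e) * \<bar>K\<bar> \<le> c"
    using c by (simp_all add: e_def)
  have [measurable]: "\<epsilon> i \<in> borel_measurable M" "Chat n \<in> borel_measurable M" for i n
    by (simp_all add: eps_meas Chat_meas)
  show ?thesis
  proof (rule outer_prob_tendsto_zeroI)
    fix \<eta> :: real assume \<eta>: "\<eta> > 0"
    obtain R where "eventually (\<lambda>n. measure M {\<omega>\<in>space M.
        R * sqrt (real n) < Max ((\<lambda>k. norm (\<Sum>i=1..k. \<epsilon> (int i) \<omega>)) ` {..n})} < \<eta> / 2) sequentially"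
      using max_partial_sums_bounded_in_probability[OF prob_space_axioms eps_meas N W_meas W_cont fclt, of "\<eta> / 2"] \<eta>
      by auto
    moreover have "eventually (\<lambda>n. measure M {\<omega>\<in>space M. norm (Chat n \<omega>) > e * (real n * (norm (\<Delta> n))\<^sup>2)}
        < \<eta> / 2) sequentially"
      using Chat_small[OF e(1)] \<eta> by (intro order_tendstoD(2)) auto
    moreover have "eventually (\<lambda>n. 8 * R < c * (sqrt (real n) * norm (\<Delta> n))) sequentially"
      using Delta_large c unfolding filterlim_at_top_dense
      by (auto simp: pos_divide_less_eq mult.commute dest: spec[of _ "8 * R / c"])
    moreover note eventually_ge_at_top[of N0]
    ultimately show "eventually (\<lambda>n. \<exists>B\<in>sets M.
        {\<omega>\<in>space M. T_WF n (\<lambda>i. X n i \<omega>) (Chat n \<omega>) (lam1 n \<omega>) \<le> K} \<subseteq> B \<and> measure M B < \<eta>)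
        sequentially"
    proof eventually_elim
      case (elim n)
      let ?B1 = "{\<omega>\<in>space M. norm (Chat n \<omega>) > e * (real n * (norm (\<Delta> n))\<^sup>2)}"
      let ?B2 = "{\<omega>\<in>space M. R * sqrt (real n) < Max ((\<lambda>k. norm (\<Sum>i=1..k. \<epsilon> (int i) \<omega>)) ` {..n})}"
      have sets: "?B1 \<in> sets M" "?B2 \<in> sets M"
        by measurable
      obtain ka kb m where "0 < m" "ka + m < n" "kb + m < n"
        "c * real n \<le> \<bar>(\<Sum>i\<in>{ka<..ka + m}. g (real i / real n)) - (\<Sum>i\<in>{kb<..kb + m}. g (real i / real n))\<bar>"
        using windows[OF elim(4)] by blast
      from T_WF_le_subset[OF _ e(2) this elim(3)] e(1)
      have "{\<omega>\<in>space M. T_WF n (\<lambda>i. X n i \<omega>) (Chat n \<omega>) (lam1 n \<omega>) \<le> K} \<subseteq> ?B1 \<union> ?B2"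
        by simp
      moreover have "measure M (?B1 \<union> ?B2) < \<eta>"
        using measure_Un_le[OF sets] elim(1,2) by linarith
      ultimately show ?case
        using sets by blast
    qed
  qed auto
qed

end

theorem theorem2p2:
  fixes M :: "'a measure"
    and \<epsilon> :: "int \<Rightarrow> 'a \<Rightarrow> 'h::{real_inner, polish_space}"
    and \<mu> :: 'h and \<Delta> :: "nat \<Rightarrow> 'h" and g :: "real \<Rightarrow> real"
    and X :: "nat \<Rightarrow> nat \<Rightarrow> 'a \<Rightarrow> 'h"
    and Chat :: "nat \<Rightarrow> 'a \<Rightarrow> ('h \<Rightarrow>\<^sub>L 'h)"
    and lam1 :: "nat \<Rightarrow> 'a \<Rightarrow> real"
    and C :: "int \<Rightarrow> ('h \<Rightarrow>\<^sub>L 'h)" and C\<epsilon> :: "'h \<Rightarrow>\<^sub>L 'h"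
  assumes M: "prob_space M"
    \<comment> \<open>model\<close>
    and X_def: "\<And>n i \<omega>. X n i \<omega> = \<mu> + g (real i / real n) *\<^sub>R \<Delta> n + \<epsilon> (int i) \<omega>"
    \<comment> \<open>assumptions on g\<close>
    and g_nonconst: "\<exists>s\<in>{0..1}. \<exists>t\<in>{0..1}. g s \<noteq> g t"
    and g_bounded: "bounded (g ` {0..1})"
    and g_int: "g integrable_on {0..1}"
    and g_pc: "piecewise_continuous_01 g"
    and g0: "g 0 = 0"
    \<comment> \<open>(A1)\<close>
    and eps_meas: "\<And>i. \<epsilon> i \<in> borel_measurable M"
    and eps_centered: "\<And>i. integrable M (\<epsilon> i) \<and> (\<integral>\<omega>. \<epsilon> i \<omega> \<partial>M) = 0"
    and eps_stat: "strictly_stationary M \<epsilon>"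
    and eps_moment: "\<exists>k>2. integrable M (\<lambda>\<omega>. norm (\<epsilon> 1 \<omega>) powr k)"
    and C_def: "\<And>r x. blinfun_apply (C r) x = (\<integral>\<omega>. blinfun_apply (tensor (\<epsilon> 0 \<omega>) (\<epsilon> r \<omega>)) x \<partial>M)"
    and C_abs_sum: "(\<lambda>r. norm (C r)) summable_on UNIV"
    and Ceps_def: "C\<epsilon> = (\<Sum>\<^sub>\<infinity>r. C r)"
    and Ceps_nz: "C\<epsilon> \<noteq> 0"
    and Ceps_eig: "\<exists>(P::nat set) (v::nat \<Rightarrow> 'h) (lam::nat \<Rightarrow> real).
        (P = UNIV \<or> (\<exists>d. P = {1..d})) \<and>
        (\<forall>p\<in>P. norm (v p) = 1) \<and> (\<forall>p\<in>P. \<forall>q\<in>P. p \<noteq> q \<longrightarrow> v p \<bullet> v q = 0) \<and>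
        closure (span (v ` P)) = UNIV \<and>
        (\<forall>p\<in>P. \<forall>q\<in>P. p \<le> q \<longrightarrow> lam q \<le> lam p) \<and>
        (\<forall>x. ((\<lambda>p. (lam p * (v p \<bullet> x)) *\<^sub>R v p) has_sum blinfun_apply C\<epsilon> x) P) \<and>
        ((\<lambda>(p, h). \<bar>cov M (\<lambda>\<omega>. \<epsilon> 0 \<omega> \<bullet> v p) (\<lambda>\<omega>. \<epsilon> h \<omega> \<bullet> v p)\<bar>) summable_on (P \<times> UNIV))"
    \<comment> \<open>(A2)\<close>
    and eps_fclt: "\<exists>(N::'w measure) W. brownian_motion N W C\<epsilon> \<and>
        weak_conv_D M (\<lambda>n \<omega> t. (1 / sqrt (real n)) *\<^sub>R (\<Sum>i=1..nat \<lfloor>t * real n\<rfloor>. \<epsilon> (int i) \<omega>))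
                    N (\<lambda>\<omega> t. W t \<omega>)"
    \<comment> \<open>the estimator Chat_n: random bounded self-adjoint psd operator computed from X_1..X_n\<close>
    and Chat_fun: "\<exists>F. \<forall>n \<omega>. Chat n \<omega> = F n (map (\<lambda>i. X n i \<omega>) [1..<n+1])"
    and Chat_meas: "\<And>n. Chat n \<in> borel_measurable M"
    and Chat_psd: "\<And>n \<omega>. psd_op (Chat n \<omega>)"
    and lam1: "\<And>n \<omega>. is_largest_eigenvalue (Chat n \<omega>) (lam1 n \<omega>)"
    and Chat_pd: "\<And>n \<omega>. pd_op (Chat n \<omega> + lam1 n \<omega> *\<^sub>R id_blinfun)"
    \<comment> \<open>rates\<close>
    and Chat_small: "\<And>e. e > 0 \<Longrightarrow>
        (\<lambda>n. measure M {\<omega>\<in>space M. norm (Chat n \<omega>) > e * (real n * (norm (\<Delta> n))\<^sup>2)}) \<longlonglongrightarrow> 0"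
    and Delta_large: "filterlim (\<lambda>n. sqrt (real n) * norm (\<Delta> n)) at_top sequentially"
  shows "\<forall>K::real. (\<lambda>n. outer_prob M {\<omega>\<in>space M. T_WF n (\<lambda>i. X n i \<omega>) (Chat n \<omega>) (lam1 n \<omega>) \<le> K})
           \<longlonglongrightarrow> 0"
proof -
  \<comment> \<open>From (A1) only the measurability of the errors is used, of \<open>g\<close> only non-constancy and
    piecewise continuity, and nothing about how \<open>Chat\<close> is computed: (A2) alone controls the noise.\<close>
  obtain N :: "'w measure" and W where bm: "brownian_motion N W C\<epsilon>"
    and fclt: "weak_conv_D M (\<lambda>n \<omega> t. (1 / sqrt (real n)) *\<^sub>R (\<Sum>i=1..nat \<lfloor>t * real n\<rfloor>. \<epsilon> (int i) \<omega>))
      N (\<lambda>\<omega> t. W t \<omega>)"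
    using eps_fclt by blast
  have N: "prob_space N" "\<And>t. W t \<in> borel_measurable N"
    "\<And>\<omega>. \<omega> \<in> space N \<Longrightarrow> continuous_on {0..1} (\<lambda>t. W t \<omega>)"
    using bm by (simp_all add: brownian_motion_def)
  have eig: "is_eigenvalue (Chat n \<omega>) (lam1 n \<omega>)" for n \<omega>
    using lam1 by (simp add: is_largest_eigenvalue_def)
  interpret mean_change_model M \<epsilon> \<mu> \<Delta> g X Chat lam1 N W
    by (rule mean_change_model.intro[OF M mean_change_model_axioms.intro[OF X_def g_nonconst g_pc eps_meas
          N fclt Chat_meas Chat_psd eig Chat_pd Chat_small Delta_large]])
  show ?thesis
    using outer_prob_T_WF_le_tendsto_zero by blast
qed

end
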